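(* Let $W=W_{\mathrm{aff}}\rtimes\Omega$ be an extended Coxeter group and let $1\to T\to G\to W\to1$ be a group extension of $W$ by an abelian group $T$ (written multiplicatively, with the $W$-action on $T$ induced by conjugation in $G$), together with a set-theoretic section $n:W\to G$ of $G\to W$ such that $n(ww')=n(w)n(w')$ whenever $\ell(ww')=\ell(w)+\ell(w')$. Let $\phi(w,w'):=n(w)n(w')n(ww')^{-1}\in T$. Then there is a unique $W$-equivariant group homomorphism $h:\mathbb Z[\mathfrak H]\to T$ with $h(\mathbf a_s)=n(s)^2$ for all $s\in S$, and \[ \phi(w,w')=h\big(\mathbb X(w,w')\big)\quad\text{for all } w,w'\in W. \]
   Context: For a Coxeter group $(W_{\mathrm{aff}},S)$ with length $\ell$, $\mathfrak H=\{vsv^{-1}:v\in W_{\mathrm{aff}},s\in S\}$ is the set of hyperplanes; for $v=s_1\cdots s_r$ reduced the hyperplanes separating $1$ and $v$ are $(s_1\cdots s_{i-1})s_i(s_1\cdots s_{i-1})^{-1}$, and $H$ separates $v_1,v_2$ iff $v_1^{-1}Hv_1$ separates $1$ and $v_1^{-1}v_2$. Extended Coxeter group: $W=W_{\mathrm{aff}}\rtimes\Omega$ with $(W_{\mathrm{aff}},S)$ Coxeter and $\Omega$ preserving $S$ by conjugation; $\ell(vu)=\ell(v)$ and $vu$ is identified with the chamber $v$ for questions of separation ($v\in W_{\mathrm{aff}},u\in\Omega$). $W$ acts on $\mathfrak H$ by conjugation, hence on the free abelian group $\mathbb Z[\mathfrak H]$ (written multiplicatively, generators $\mathbf a_H$).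 $\mathbb X(w,w')=\prod_H\mathbf a_H\in\mathbb Z[\mathfrak H]$, product over all $H\in\mathfrak H$ separating both $1$ from $w$ and $w$ from $ww'$. *)

theory Defs
  imports "HOL-Algebra.Algebra" "HOL-Algebra.Free_Abelian_Groups"
begin

definition word_prod :: "('a, 'b) monoid_scheme \<Rightarrow> 'a list \<Rightarrow> 'a" where
  "word_prod W xs = foldr (\<lambda>x y. x \<otimes>\<^bsub>W\<^esub> y) xs \<one>\<^bsub>W\<^esub>"

(* The presentation is expressed by its universal property; it suffices to test groups
   whose carrier lives in the type of sets of words over S. *)
definition coxeter_system :: "'w monoid \<Rightarrow> 'w set \<Rightarrow> bool" where
  "coxeter_system W S \<longleftrightarrow> group W \<and> S \<subseteq> carrier W \<and>
     (\<forall>s\<in>S. s \<noteq> \<one>\<^bsub>W\<^esub> \<and> s \<otimes>\<^bsub>W\<^esub> s = \<one>\<^bsub>W\<^esub>) \<and>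
     generate W S = carrier W \<and>
     (\<forall>(H :: 'w list set monoid) f. group H \<and> f \<in> S \<rightarrow> carrier H \<and>
        (\<forall>s\<in>S. \<forall>t\<in>S. group.ord W (s \<otimes>\<^bsub>W\<^esub> t) \<noteq> 0 \<longrightarrow>
            (f s \<otimes>\<^bsub>H\<^esub> f t) [^]\<^bsub>H\<^esub> group.ord W (s \<otimes>\<^bsub>W\<^esub> t) = \<one>\<^bsub>H\<^esub>)
      \<longrightarrow> (\<exists>\<phi>\<in>hom W H. \<forall>s\<in>S. \<phi> s = f s))"

definition ext_coxeter :: "'w monoid \<Rightarrow> 'w set \<Rightarrow> 'w set \<Rightarrow> 'w set \<Rightarrow> bool" where
  "ext_coxeter W Waff S Om \<longleftrightarrow> group W \<and> Waff \<lhd> W \<and> subgroup Om W \<and>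
     Waff \<inter> Om = {\<one>\<^bsub>W\<^esub>} \<and>
     (\<forall>w\<in>carrier W. \<exists>v\<in>Waff. \<exists>u\<in>Om. w = v \<otimes>\<^bsub>W\<^esub> u) \<and>
     coxeter_system (W\<lparr>carrier := Waff\<rparr>) S \<and>
     (\<forall>u\<in>Om. \<forall>s\<in>S. u \<otimes>\<^bsub>W\<^esub> s \<otimes>\<^bsub>W\<^esub> inv\<^bsub>W\<^esub> u \<in> S)"

definition chamber :: "'w monoid \<Rightarrow> 'w set \<Rightarrow> 'w set \<Rightarrow> 'w \<Rightarrow> 'w" where
  "chamber W Waff Om w = (THE v. v \<in> Waff \<and> (\<exists>u\<in>Om. w = v \<otimes>\<^bsub>W\<^esub> u))"

definition aff_len :: "'w monoid \<Rightarrow> 'w set \<Rightarrow> 'w \<Rightarrow> nat" where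
  "aff_len W S v = (LEAST n. \<exists>xs. length xs = n \<and> set xs \<subseteq> S \<and> word_prod W xs = v)"

definition ext_len :: "'w monoid \<Rightarrow> 'w set \<Rightarrow> 'w set \<Rightarrow> 'w set \<Rightarrow> 'w \<Rightarrow> nat" where
  "ext_len W Waff S Om w = aff_len W S (chamber W Waff Om w)"

definition reduced_word :: "'w monoid \<Rightarrow> 'w set \<Rightarrow> 'w \<Rightarrow> 'w list \<Rightarrow> bool" where
  "reduced_word W S v xs \<longleftrightarrow> set xs \<subseteq> S \<and> word_prod W xs = v \<and> length xs = aff_len W S v"

definition hyperplanes :: "'w monoid \<Rightarrow> 'w set \<Rightarrow> 'w set \<Rightarrow> 'w set" where
  "hyperplanes W Waff S = {v \<otimes>\<^bsub>W\<^esub> s \<otimes>\<^bsub>W\<^esub> inv\<^bsub>W\<^esub> v | v s. v \<in> Waff \<and> s \<in> S}"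

definition sep_one :: "'w monoid \<Rightarrow> 'w set \<Rightarrow> 'w \<Rightarrow> 'w set" where
  "sep_one W S v = {H. \<exists>xs. reduced_word W S v xs \<and>
      (\<exists>i<length xs. H = word_prod W (take i xs) \<otimes>\<^bsub>W\<^esub> xs ! i \<otimes>\<^bsub>W\<^esub> inv\<^bsub>W\<^esub> (word_prod W (take i xs)))}"

(* H separates w1 and w2 (elements of W identified with their chambers in Waff) *)
definition separates :: "'w monoid \<Rightarrow> 'w set \<Rightarrow> 'w set \<Rightarrow> 'w set \<Rightarrow> 'w \<Rightarrow> 'w \<Rightarrow> 'w \<Rightarrow> bool" where
  "separates W Waff S Om H w1 w2 \<longleftrightarrow>
     (let c1 = chamber W Waff Om w1; c2 = chamber W Waff Om w2 in
      inv\<^bsub>W\<^esub> c1 \<otimes>\<^bsub>W\<^esub> H \<otimes>\<^bsub>W\<^esub> c1 \<in> sep_one W S (inv\<^bsub>W\<^esub> c1 \<otimes>\<^bsub>W\<^esub> c2))"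

(* X(w,w') in Z[H] (group law written additively on the poly_mapping type) *)
definition XX :: "'w monoid \<Rightarrow> 'w set \<Rightarrow> 'w set \<Rightarrow> 'w set \<Rightarrow> 'w \<Rightarrow> 'w \<Rightarrow> 'w \<Rightarrow>\<^sub>0 int" where
  "XX W Waff S Om w w' = (\<Sum>H \<in> {H \<in> hyperplanes W Waff S.
        separates W Waff S Om H \<one>\<^bsub>W\<^esub> w \<and> separates W Waff S Om H w (w \<otimes>\<^bsub>W\<^esub> w')}. frag_of H)"

definition hyp_act :: "'w monoid \<Rightarrow> 'w \<Rightarrow> ('w \<Rightarrow>\<^sub>0 int) \<Rightarrow> ('w \<Rightarrow>\<^sub>0 int)" where
  "hyp_act W w x = frag_extend (\<lambda>H. frag_of (w \<otimes>\<^bsub>W\<^esub> H \<otimes>\<^bsub>W\<^esub> inv\<^bsub>W\<^esub> w)) x"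

definition conj_act :: "'g monoid \<Rightarrow> ('g \<Rightarrow> 'w) \<Rightarrow> 'w \<Rightarrow> 'g \<Rightarrow> 'g" where
  "conj_act G p w t = (let g = (SOME g. g \<in> carrier G \<and> p g = w) in g \<otimes>\<^bsub>G\<^esub> t \<otimes>\<^bsub>G\<^esub> inv\<^bsub>G\<^esub> g)"

end

theory Submission
  imports Defs
begin

text \<open>
  Uniqueness of \<open>h\<close> is forced: every hyperplane is \<open>H = vsv\<inverse>\<close> for some \<open>s \<in> S\<close>, so
  equivariance gives \<open>h(\<^bold>a\<^sub>H) = n(v) n(s)\<^sup>2 n(v)\<inverse>\<close>. This value is well defined because
  \<open>xs = s'x\<close> with \<open>\<ell>(xs) = \<ell>(x) + 1\<close> forces \<open>n(x) n(s) = n(s') n(x)\<close>, and conjugation on the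
  abelian \<open>T\<close> only depends on the image in \<open>W\<close>.

  For the cocycle formula write \<open>w' = s w''\<close> with \<open>\<ell>(w') = \<ell>(w'') + 1\<close>. Then
  \<open>\<phi>(w, w') = \<phi>(w, s) \<phi>(ws, w'')\<close>, where \<open>\<phi>(w, s)\<close> is \<open>1\<close> or \<open>h(\<^bold>a\<^sub>H)\<close> with \<open>H = wsw\<inverse>\<close>
  according as \<open>\<ell>(ws) > \<ell>(w)\<close> or not, and the set of hyperplanes defining \<open>\<^bold>X(w, w')\<close> is the disjoint
  union of those defining \<open>\<^bold>X(w, s)\<close> and \<open>\<^bold>X(ws, w'')\<close>; induction on \<open>\<ell>(w')\<close> concludes.

  The combinatorics of hyperplanes needs the exchange condition: the hyperplanes separating
  \<open>1\<close> from \<open>v\<close> are those \<open>r\<close> with \<open>\<ell>(rv) < \<ell>(v)\<close>, whatever reduced word is used to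
  list them. As usual this rests on Tits' representation of \<open>W\<^sub>a\<^sub>f\<^sub>f\<close> on \<open>R \<times> {\<plusminus>1}\<close>, which
  exists by the universal property of the Coxeter presentation.
\<close>

lemma (in group) inv_mult_cancel_left[simp]: "x \<in> carrier G \<Longrightarrow> y \<in> carrier G \<Longrightarrow> inv x \<otimes> (x \<otimes> y) = y"
  by (simp add: m_assoc[symmetric])
lemma (in group) mult_inv_cancel_left[simp]: "x \<in> carrier G \<Longrightarrow> y \<in> carrier G \<Longrightarrow> x \<otimes> (inv x \<otimes> y) = y"
  by (simp add: m_assoc[symmetric])

definition transport_group :: "('a,'c) monoid_scheme \<Rightarrow> ('a \<Rightarrow> 'b) \<Rightarrow> 'b monoid" where
  "transport_group G e = \<lparr>carrier = e ` carrier G,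
     monoid.mult = (\<lambda>a b. e (inv_into (carrier G) e a \<otimes>\<^bsub>G\<^esub> inv_into (carrier G) e b)), one = e \<one>\<^bsub>G\<^esub>\<rparr>"

lemma transport_group:
  fixes G :: "('a,'c) monoid_scheme" (structure)
  assumes G: "group G" and inj: "inj_on e (carrier G)"
  shows "group (transport_group G e)" "e \<in> hom G (transport_group G e)"
proof -
  interpret group G by (rule G)
  have d[simp]: "inv_into (carrier G) e (e x) = x" if "x \<in> carrier G" for x
    using inj that by simp
  show "group (transport_group G e)"
  proof (rule groupI)
    fix x assume "x \<in> carrier (transport_group G e)"
    then obtain a where a: "a \<in> carrier G" "x = e a" by (auto simp: transport_group_def)
    show "\<exists>y\<in>carrier (transport_group G e). y \<otimes>\<^bsub>transport_group G e\<^esub> x = \<one>\<^bsub>transport_group G e\<^esub>"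
      using a by (intro bexI[of _ "e (inv a)"]) (auto simp: transport_group_def)
  qed (auto simp: transport_group_def m_assoc)
  show "e \<in> hom G (transport_group G e)"
    by (rule homI) (auto simp: transport_group_def)
qed

lemma (in group) conj_mem_conj_image_iff:
  assumes "g \<in> carrier G" "x \<in> carrier G" "A \<subseteq> carrier G"
  shows "g \<otimes> x \<otimes> inv g \<in> (\<lambda>a. g \<otimes> a \<otimes> inv g) ` A \<longleftrightarrow> x \<in> A"
proof -
  have "inj_on (\<lambda>a. g \<otimes> a \<otimes> inv g) (carrier G)"
    using assms(1) by (intro inj_onI) (simp add: m_assoc)
  then show ?thesis using assms inj_on_image_mem_iff by (metis inv_closed m_closed)
qed

lemma (in group) mult_pow_swap: "a \<in> carrier G \<Longrightarrow> b \<in> carrier G \<Longrightarrow> a \<otimes> (b \<otimes> a) [^] (k::nat) = (a \<otimes> b) [^] k \<otimes> a"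
proof (induction k)
  case (Suc k)
  have "a \<otimes> (b \<otimes> a) [^] Suc k = (a \<otimes> (b \<otimes> a) [^] k) \<otimes> (b \<otimes> a)"
    using Suc.prems by (simp add: m_assoc)
  also have "\<dots> = (a \<otimes> b) [^] k \<otimes> (a \<otimes> b) \<otimes> a" using Suc by (simp add: m_assoc)
  finally show ?case by simp
qed simp

lemma (in group) pow_swap_eq_one:
  assumes s: "s \<in> carrier G" and t: "t \<in> carrier G" and m: "(s \<otimes> t) [^] (m::nat) = \<one>"
  shows "(t \<otimes> s) [^] m = \<one>"
proof -
  have "t = t \<otimes> (s \<otimes> t) [^] m" using m s t by simp
  also have "\<dots> = (t \<otimes> s) [^] m \<otimes> t" using s t by (simp add: mult_pow_swap)
  finally have "\<one> \<otimes> t = (t \<otimes> s) [^] m \<otimes> t" using s t by simp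
  then show ?thesis using s t r_cancel[of t "\<one>" "(t \<otimes> s) [^] m"] by simp
qed

lemma free_Abelian_group_hom_eq:
  assumes "group H" and h1: "h1 \<in> hom (free_Abelian_group A) H" and h2: "h2 \<in> hom (free_Abelian_group A) H"
    and agree: "\<And>a. a \<in> A \<Longrightarrow> h1 (frag_of a) = h2 (frag_of a)"
    and x: "x \<in> carrier (free_Abelian_group A)"
  shows "h1 x = h2 x"
proof -
  interpret h1: group_hom "free_Abelian_group A" H h1
    using assms by (simp add: group_hom_def group_hom_axioms_def)
  interpret h2: group_hom "free_Abelian_group A" H h2
    using assms by (simp add: group_hom_def group_hom_axioms_def)
  have "Poly_Mapping.keys x \<subseteq> A" using x by simp
  then show ?thesis
  proof (rule free_Abelian_group_induct[where P = "\<lambda>x. h1 x = h2 x"])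
    show "h1 0 = h2 0" using h1.hom_one h2.hom_one by simp
  next
    fix x y assume xy: "Poly_Mapping.keys x \<subseteq> A" "Poly_Mapping.keys y \<subseteq> A" "h1 x = h2 x" "h1 y = h2 y"
    then have c: "x \<in> carrier (free_Abelian_group A)" "y \<in> carrier (free_Abelian_group A)"
      and e: "x - y = x \<otimes>\<^bsub>free_Abelian_group A\<^esub> inv\<^bsub>free_Abelian_group A\<^esub> y" by simp_all
    show "h1 (x - y) = h2 (x - y)" unfolding e
      by (simp only: h1.hom_mult[OF c(1) h1.G.inv_closed[OF c(2)]] h1.hom_inv[OF c(2)]
          h2.hom_mult[OF c(1) h1.G.inv_closed[OF c(2)]] h2.hom_inv[OF c(2)] xy(3,4))
  qed (rule agree)
qed

fun alternating :: "'a \<Rightarrow> 'a \<Rightarrow> nat \<Rightarrow> 'a list" where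
  "alternating a b 0 = []"
| "alternating a b (Suc n) = a # alternating b a n"

lemma set_alternating: "set (alternating a b n) \<subseteq> {a, b}"
  by (induction n arbitrary: a b) auto

lemma length_alternating[simp]: "length (alternating a b n) = n"
  by (induction n arbitrary: a b) auto

lemma alternating_Suc_Suc: "alternating a b (Suc (Suc n)) = a # b # alternating a b n" by simp
lemma alternating_double_Suc: "alternating a b (2 * Suc k) = a # b # alternating a b (2 * k)"
proof -
  have "2 * Suc k = Suc (Suc (2 * k))" by simp
  then show ?thesis by (simp only: alternating_Suc_Suc)
qed

lemma card_less_double_periodic:
  assumes "\<And>i. P (i + m) = P i"
  shows "card {i. i < 2 * m \<and> P i} = 2 * card {i::nat. i < m \<and> P i}"
proof -
  have "{i. i < 2 * m \<and> P i} = {i. i < m \<and> P i} \<union> (\<lambda>i. i + m) ` {i. i < m \<and> P i}"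
  proof (intro equalityI subsetI)
    fix x assume x: "x \<in> {i. i < 2 * m \<and> P i}"
    show "x \<in> {i. i < m \<and> P i} \<union> (\<lambda>i. i + m) ` {i. i < m \<and> P i}"
    proof (cases "x < m")
      case False
      then have "x = (x - m) + m" by simp
      moreover have "P (x - m)" using assms[of "x - m"] x False by simp
      ultimately show ?thesis using x False by (auto intro!: image_eqI[of _ _ "x - m"])
    qed (use x in auto)
  qed (auto simp: assms)
  moreover have "{i. i < m \<and> P i} \<inter> (\<lambda>i. i + m) ` {i. i < m \<and> P i} = {}" by auto
  ultimately show ?thesis by (simp add: card_Un_disjoint card_image)
qed

text \<open>The universal property in \<^const>\<open>coxeter_system\<close> only speaks about groups whose
  elements are sets of \<^typ>\<open>'w list\<close>. A bijection of \<open>R \<times> bool\<close> is encoded by its graph,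
  each pair of points being coded as a list, so that the group of such bijections can be
  transported to a group of that type.\<close>

definition pair_code :: "'a \<times> bool \<Rightarrow> 'a \<times> bool \<Rightarrow> 'a list" where
  "pair_code a b = fst a # fst b # replicate (2 * (if snd a then 1 else 0) + (if snd b then 1 else 0)) (fst a)"

lemma pair_code_inj: "pair_code a b = pair_code c d \<Longrightarrow> a = c \<and> b = d"
proof -
  assume h: "pair_code a b = pair_code c d"
  hence "length (pair_code a b) = length (pair_code c d)" by simp
  hence l: "2 * (if snd a then 1 else 0) + (if snd b then 1 else 0) = 2 * (if snd c then 1 else 0) + (if snd d then (1::nat) else 0)"
    by (simp add: pair_code_def)
  have "snd a = snd c \<and> snd b = snd d" using l by (auto split: if_splits)
  moreover have "fst a = fst c" "fst b = fst d" using h by (auto simp: pair_code_def)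
  ultimately show ?thesis by (simp add: prod_eq_iff)
qed

definition graph_code :: "('a \<times> bool) set \<Rightarrow> ('a \<times> bool \<Rightarrow> 'a \<times> bool) \<Rightarrow> 'a list set" where
  "graph_code A f = (\<lambda>a. pair_code a (f a)) ` A"

lemma inj_on_graph_code: "inj_on (graph_code A) (Bij A)"
proof (rule inj_onI)
  fix f g assume f: "f \<in> Bij A" and g: "g \<in> Bij A" and e: "graph_code A f = graph_code A g"
  show "f = g"
  proof (rule extensionalityI[OF Bij_imp_extensional[OF f] Bij_imp_extensional[OF g]])
    fix a assume a: "a \<in> A"
    then have "pair_code a (f a) \<in> graph_code A g" using e by (auto simp: graph_code_def)
    then obtain b where "b \<in> A" "pair_code a (f a) = pair_code b (g b)" by (auto simp: graph_code_def)
    then show "f a = g a" using pair_code_inj by blast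
  qed
qed

locale ext_cox = group W for W :: "'w monoid" (structure) +
  fixes Waff S Om :: "'w set"
  assumes ext: "ext_coxeter W Waff S Om"
begin

abbreviation "Waff_grp \<equiv> W\<lparr>carrier := Waff\<rparr>"
abbreviation "wp \<equiv> word_prod W"
abbreviation "len \<equiv> aff_len W S"

lemma normal_Waff: "Waff \<lhd> W" using ext by (simp add: ext_coxeter_def)
lemma sub_Waff: "subgroup Waff W" using normal_Waff by (simp add: normal_def)
lemma sub_Om: "subgroup Om W" using ext by (simp add: ext_coxeter_def)
lemma Waff_Om_trivial: "Waff \<inter> Om = {\<one>}" using ext by (simp add: ext_coxeter_def)
lemma Waff_Om_decomp: "w \<in> carrier W \<Longrightarrow> \<exists>v\<in>Waff. \<exists>u\<in>Om. w = v \<otimes> u" using ext by (simp add: ext_coxeter_def)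
lemma coxeter_Waff: "coxeter_system Waff_grp S" using ext by (simp add: ext_coxeter_def)
lemma Om_conj_S: "u \<in> Om \<Longrightarrow> s \<in> S \<Longrightarrow> u \<otimes> s \<otimes> inv u \<in> S" using ext by (simp add: ext_coxeter_def)
lemma group_Waff_grp: "group Waff_grp" using coxeter_Waff by (simp add: coxeter_system_def)
lemma S_Waff: "S \<subseteq> Waff" using coxeter_Waff by (simp add: coxeter_system_def)
lemma S_ne: "s \<in> S \<Longrightarrow> s \<noteq> \<one>" using coxeter_Waff by (simp add: coxeter_system_def)
lemma S_sq: "s \<in> S \<Longrightarrow> s \<otimes> s = \<one>" using coxeter_Waff by (simp add: coxeter_system_def)
lemma generate_S: "generate Waff_grp S = Waff" using coxeter_Waff by (simp add: coxeter_system_def)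
lemma coxeter_universal: "group (H :: 'w list set monoid) \<Longrightarrow> f \<in> S \<rightarrow> carrier H \<Longrightarrow>
        (\<forall>s\<in>S. \<forall>t\<in>S. group.ord Waff_grp (s \<otimes> t) \<noteq> 0 \<longrightarrow>
            (f s \<otimes>\<^bsub>H\<^esub> f t) [^]\<^bsub>H\<^esub> group.ord Waff_grp (s \<otimes> t) = \<one>\<^bsub>H\<^esub>)
      \<Longrightarrow> (\<exists>\<phi>\<in>hom Waff_grp H. \<forall>s\<in>S. \<phi> s = f s)"
  using coxeter_Waff unfolding coxeter_system_def by auto

lemma Waff_carr: "v \<in> Waff \<Longrightarrow> v \<in> carrier W" by (rule subgroup.mem_carrier[OF sub_Waff])
lemma Om_carr: "u \<in> Om \<Longrightarrow> u \<in> carrier W" by (rule subgroup.mem_carrier[OF sub_Om])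
lemma S_carr: "s \<in> S \<Longrightarrow> s \<in> carrier W" using S_Waff Waff_carr by auto
lemma S_inv: "s \<in> S \<Longrightarrow> inv s = s" using S_sq S_carr inv_char by metis
lemma S_cancel[simp]: "s \<in> S \<Longrightarrow> y \<in> carrier W \<Longrightarrow> s \<otimes> (s \<otimes> y) = y"
  by (simp add: m_assoc[symmetric] S_sq S_carr)

lemma inv_Waff_grp: "v \<in> Waff \<Longrightarrow> inv\<^bsub>Waff_grp\<^esub> v = inv v"
  by (simp add: group.m_inv_consistent[symmetric] is_group sub_Waff)

lemma wp_Nil[simp]: "wp [] = \<one>" by (simp add: word_prod_def)
lemma wp_Cons[simp]: "wp (x # xs) = x \<otimes> wp xs" by (simp add: word_prod_def)
lemma wp_Waff: "set xs \<subseteq> S \<Longrightarrow> wp xs \<in> Waff"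
proof (induction xs)
  case (Cons a xs)
  then show ?case using S_Waff subgroup.m_closed[OF sub_Waff] by auto
qed (simp add: subgroup.one_closed[OF sub_Waff])
lemma wp_carr[simp]: "set xs \<subseteq> S \<Longrightarrow> wp xs \<in> carrier W"
  using wp_Waff Waff_carr by blast
lemma wp_take_carr[simp]: "set xs \<subseteq> S \<Longrightarrow> wp (take i xs) \<in> carrier W"
  by (meson wp_carr set_take_subset order_trans)
lemma wp_drop_carr[simp]: "set xs \<subseteq> S \<Longrightarrow> wp (drop i xs) \<in> carrier W"
  by (meson wp_carr set_drop_subset order_trans)
lemma nth_carr[simp]: "set xs \<subseteq> S \<Longrightarrow> i < length xs \<Longrightarrow> xs ! i \<in> carrier W"
  using S_carr nth_mem by blast

lemma wp_append: "set xs \<subseteq> S \<Longrightarrow> set ys \<subseteq> S \<Longrightarrow> wp (xs @ ys) = wp xs \<otimes> wp ys"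
  by (induction xs) (auto simp: m_assoc S_carr)
lemma wp_rev: "set xs \<subseteq> S \<Longrightarrow> inv (wp xs) = wp (rev xs)"
proof (induction xs)
  case (Cons x xs)
  then show ?case by (simp add: wp_append inv_mult_group S_carr S_inv)
qed simp

lemma Waff_wp: "v \<in> Waff \<Longrightarrow> \<exists>xs. set xs \<subseteq> S \<and> wp xs = v"
proof -
  assume "v \<in> Waff"
  hence "v \<in> generate Waff_grp S" by (simp add: generate_S)
  thus ?thesis
  proof (induction rule: generate.induct)
    case one
    then show ?case by (rule exI[of _ "[]"]) simp
  next
    case (incl h)
    then show ?case by (intro exI[of _ "[h]"]) (simp add: S_carr)
  next
    case (inv h)
    then show ?case using S_Waff by (intro exI[of _ "[h]"]) (auto simp: inv_Waff_grp S_inv S_carr)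
  next
    case (eng h1 h2)
    then obtain xs ys where "set xs \<subseteq> S" "wp xs = h1" "set ys \<subseteq> S" "wp ys = h2" by auto
    then show ?case by (intro exI[of _ "xs @ ys"]) (simp add: wp_append)
  qed
qed

lemma len_le_length: "set xs \<subseteq> S \<Longrightarrow> len (wp xs) \<le> length xs"
  unfolding aff_len_def by (rule Least_le) blast

lemma reduced_word_ex: "v \<in> Waff \<Longrightarrow> \<exists>xs. reduced_word W S v xs"
proof -
  assume "v \<in> Waff"
  then obtain ys where "set ys \<subseteq> S" "wp ys = v" using Waff_wp by blast
  hence "\<exists>n xs. length xs = n \<and> set xs \<subseteq> S \<and> wp xs = v" by blast
  hence "\<exists>xs. length xs = len v \<and> set xs \<subseteq> S \<and> wp xs = v"
    unfolding aff_len_def by (rule LeastI_ex)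
  thus ?thesis unfolding reduced_word_def by blast
qed

lemma reducedD: "reduced_word W S v xs \<Longrightarrow> set xs \<subseteq> S \<and> wp xs = v \<and> length xs = len v"
  by (simp add: reduced_word_def)

lemma len_one[simp]: "len \<one> = 0"
  using len_le_length[of "[]"] by simp

lemma len_eq_0: "v \<in> Waff \<Longrightarrow> len v = 0 \<Longrightarrow> v = \<one>"
  using reduced_word_ex reducedD by fastforce

lemma len_S: "s \<in> S \<Longrightarrow> len s = 1"
proof -
  assume s: "s \<in> S"
  have "len s \<le> 1" using len_le_length[of "[s]"] s S_carr by simp
  moreover have "len s \<noteq> 0" using len_eq_0 s S_ne S_Waff by blast
  ultimately show ?thesis by simp
qed

lemma len_mult_S: "v \<in> Waff \<Longrightarrow> s \<in> S \<Longrightarrow> len (v \<otimes> s) \<le> len v + 1"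
proof -
  assume v: "v \<in> Waff" and s: "s \<in> S"
  obtain xs where "reduced_word W S v xs" using reduced_word_ex v by blast
  hence xs: "set xs \<subseteq> S" "wp xs = v" "length xs = len v" by (auto dest: reducedD)
  have "wp (xs @ [s]) = v \<otimes> s" using xs s by (simp add: wp_append S_carr)
  thus ?thesis using len_le_length[of "xs @ [s]"] xs s by auto
qed

lemma len_S_mult: "v \<in> Waff \<Longrightarrow> s \<in> S \<Longrightarrow> len (s \<otimes> v) \<le> len v + 1"
proof -
  assume v: "v \<in> Waff" and s: "s \<in> S"
  obtain xs where "reduced_word W S v xs" using reduced_word_ex v by blast
  hence xs: "set xs \<subseteq> S" "wp xs = v" "length xs = len v" by (auto dest: reducedD)
  have "wp (s # xs) = s \<otimes> v" using xs s by simp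
  thus ?thesis using len_le_length[of "s # xs"] xs s by auto
qed

subsection \<open>Reflections\<close>

abbreviation "R \<equiv> hyperplanes W Waff S"

lemma R_iff: "r \<in> R \<longleftrightarrow> (\<exists>v s. r = v \<otimes> s \<otimes> inv v \<and> v \<in> Waff \<and> s \<in> S)"
  by (auto simp: hyperplanes_def)

lemma R_Waff: "r \<in> R \<Longrightarrow> r \<in> Waff"
  using S_Waff by (auto simp: R_iff intro!: subgroup.m_closed[OF sub_Waff] subgroup.m_inv_closed[OF sub_Waff])

lemma R_carr: "r \<in> R \<Longrightarrow> r \<in> carrier W" using R_Waff Waff_carr by blast

lemma R_sq: "r \<in> R \<Longrightarrow> r \<otimes> r = \<one>"
proof -
  assume "r \<in> R"
  then obtain v s where r: "r = v \<otimes> s \<otimes> inv v" "v \<in> Waff" "s \<in> S" by (auto simp: R_iff)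
  have c: "v \<in> carrier W" "s \<in> carrier W" using r Waff_carr S_carr by auto
  show ?thesis using c r by (simp add: m_assoc)
qed

lemma R_inv: "r \<in> R \<Longrightarrow> inv r = r"
  using R_sq R_carr inv_char by metis

lemma S_R: "s \<in> S \<Longrightarrow> s \<in> R"
  unfolding R_iff by (rule exI[of _ \<one>], rule exI[of _ s]) (simp add: S_carr subgroup.one_closed[OF sub_Waff])

lemma R_conj_Waff: "x \<in> Waff \<Longrightarrow> r \<in> R \<Longrightarrow> x \<otimes> r \<otimes> inv x \<in> R"
proof -
  assume x: "x \<in> Waff" and "r \<in> R"
  then obtain v s where r: "r = v \<otimes> s \<otimes> inv v" "v \<in> Waff" "s \<in> S" by (auto simp: R_iff)
  have c: "v \<in> carrier W" "s \<in> carrier W" "x \<in> carrier W" using r x Waff_carr S_carr by auto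
  have "x \<otimes> r \<otimes> inv x = (x \<otimes> v) \<otimes> s \<otimes> inv (x \<otimes> v)" using c r by (simp add: m_assoc inv_mult_group)
  moreover have "x \<otimes> v \<in> Waff" using x r subgroup.m_closed[OF sub_Waff] by blast
  ultimately show ?thesis using r unfolding R_iff by blast
qed

definition word_refl :: "'w list \<Rightarrow> nat \<Rightarrow> 'w" where
  "word_refl xs i = wp (take i xs) \<otimes> xs ! i \<otimes> inv (wp (take i xs))"

definition refl_count :: "'w list \<Rightarrow> 'w \<Rightarrow> nat" where
  "refl_count xs r = card {i. i < length xs \<and> word_refl xs i = r}"

lemma word_refl_R: "set xs \<subseteq> S \<Longrightarrow> i < length xs \<Longrightarrow> word_refl xs i \<in> R"
  unfolding word_refl_def R_iff using wp_Waff[of "take i xs"]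
  by (metis in_set_takeD nth_mem subset_code(1))

lemma word_refl_Cons_0: "x \<in> S \<Longrightarrow> word_refl (x # xs) 0 = x"
  by (simp add: word_refl_def S_carr)

lemma word_refl_Cons: "x \<in> S \<Longrightarrow> set xs \<subseteq> S \<Longrightarrow> i < length xs \<Longrightarrow> word_refl (x # xs) (Suc i) = x \<otimes> word_refl xs i \<otimes> x"
proof -
  assume x: "x \<in> S" and xs: "set xs \<subseteq> S" and i: "i < length xs"
  have c: "wp (take i xs) \<in> carrier W" "xs ! i \<in> carrier W" "x \<in> carrier W"
    using xs i x by (auto simp: S_carr intro: wp_carr order.trans[OF set_take_subset] dest: nth_mem)
  show ?thesis unfolding word_refl_def using c x
    by (simp add: inv_mult_group S_inv m_assoc)
qed

lemma refl_count_Cons: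
  assumes x: "x \<in> S" and xs: "set xs \<subseteq> S" and r: "r \<in> carrier W"
  shows "refl_count (x # xs) r = (if r = x then 1 else 0) + refl_count xs (x \<otimes> r \<otimes> x)"
proof -
  have xc: "x \<in> carrier W" using x S_carr by auto
  have eq: "(word_refl (x # xs) (Suc i) = r) \<longleftrightarrow> (word_refl xs i = x \<otimes> r \<otimes> x)" if "i < length xs" for i
  proof -
    have t: "word_refl xs i \<in> carrier W" using word_refl_R[OF xs that] R_carr by blast
    have "x \<otimes> (x \<otimes> r \<otimes> x) \<otimes> x = r" using xc r x by (simp add: m_assoc S_sq[OF x])
    moreover have "x \<otimes> (x \<otimes> word_refl xs i \<otimes> x) \<otimes> x = word_refl xs i" using xc t x by (simp add: m_assoc S_sq[OF x])
    ultimately show ?thesis using word_refl_Cons[OF x xs that] by metis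
  qed
  have "{i. i < length (x # xs) \<and> word_refl (x # xs) i = r} =
        (if r = x then {0} else {}) \<union> Suc ` {i. i < length xs \<and> word_refl xs i = x \<otimes> r \<otimes> x}"
    (is "?L = ?R")
  proof
    show "?L \<subseteq> ?R"
    proof
      fix i assume "i \<in> ?L"
      then show "i \<in> ?R" using eq word_refl_Cons_0[OF x] by (cases i) auto
    qed
    show "?R \<subseteq> ?L" using eq word_refl_Cons_0[OF x] by (auto split: if_splits)
  qed
  moreover have "0 \<notin> Suc ` A" for A by auto
  ultimately show ?thesis unfolding refl_count_def
    by (simp add: card_image)
qed

text \<open>Tits' reflection representation: \<open>s\<close> acts on \<open>R \<times> {\<plusminus>1}\<close> by sending
  \<open>(r, \<epsilon>)\<close> to \<open>(s r s, -\<epsilon>)\<close> if \<open>r = s\<close> and to \<open>(s r s, \<epsilon>)\<close> otherwise; the sign is a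
  boolean.\<close>

definition refl_step :: "'w \<Rightarrow> 'w \<times> bool \<Rightarrow> 'w \<times> bool" where
  "refl_step x a = (x \<otimes> fst a \<otimes> x, snd a \<noteq> (fst a = x))"

definition refl_word_act :: "'w list \<Rightarrow> 'w \<times> bool \<Rightarrow> 'w \<times> bool" where
  "refl_word_act xs a = foldl (\<lambda>a x. refl_step x a) a xs"

lemma refl_word_act_Nil[simp]: "refl_word_act [] a = a" by (simp add: refl_word_act_def)
lemma refl_word_act_Cons[simp]: "refl_word_act (x # xs) a = refl_word_act xs (refl_step x a)" by (simp add: refl_word_act_def)

lemma refl_word_act_eq:
  "set xs \<subseteq> S \<Longrightarrow> r \<in> carrier W \<Longrightarrow>
     refl_word_act xs (r, e) = (inv (wp xs) \<otimes> r \<otimes> wp xs, e \<noteq> odd (refl_count xs r))"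
proof (induction xs arbitrary: r e)
  case Nil
  then show ?case by (simp add: refl_count_def)
next
  case (Cons x xs)
  have x: "x \<in> S" and xs: "set xs \<subseteq> S" using Cons by auto
  have xc: "x \<in> carrier W" using x S_carr by auto
  have rc: "x \<otimes> r \<otimes> x \<in> carrier W" using xc Cons by auto
  have "refl_word_act (x # xs) (r, e) = refl_word_act xs (x \<otimes> r \<otimes> x, e \<noteq> (r = x))" by (simp add: refl_step_def)
  also have "\<dots> = (inv (wp xs) \<otimes> (x \<otimes> r \<otimes> x) \<otimes> wp xs, (e \<noteq> (r = x)) \<noteq> odd (refl_count xs (x \<otimes> r \<otimes> x)))"
    using Cons.IH[OF xs rc] by simp
  also have "inv (wp xs) \<otimes> (x \<otimes> r \<otimes> x) \<otimes> wp xs = inv (wp (x # xs)) \<otimes> r \<otimes> wp (x # xs)"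
    using xc xs Cons.prems by (simp add: inv_mult_group S_inv[OF x] m_assoc)
  also have "((e \<noteq> (r = x)) \<noteq> odd (refl_count xs (x \<otimes> r \<otimes> x))) = (e \<noteq> odd (refl_count (x # xs) r))"
    using refl_count_Cons[OF x xs Cons.prems(2)] by auto
  finally show ?case .
qed

lemma word_refl_alternating: "a \<in> S \<Longrightarrow> b \<in> S \<Longrightarrow> i < n \<Longrightarrow> word_refl (alternating a b n) i = (a \<otimes> b) [^] i \<otimes> a"
proof (induction n arbitrary: a b i)
  case 0
  then show ?case by simp
next
  case (Suc n)
  have ca: "a \<in> carrier W" "b \<in> carrier W" using Suc.prems S_carr by auto
  have st: "set (alternating b a n) \<subseteq> S" using set_alternating[of b a n] Suc.prems by auto
  show ?case
  proof (cases i)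
    case 0
    then show ?thesis using Suc.prems ca by (simp add: word_refl_Cons_0)
  next
    case (Suc j)
    with Suc.prems have j: "j < n" by simp
    have "word_refl (alternating a b (Suc n)) i = a \<otimes> word_refl (alternating b a n) j \<otimes> a"
      using word_refl_Cons[OF Suc.prems(1) st] j Suc by simp
    also have "\<dots> = a \<otimes> ((b \<otimes> a) [^] j \<otimes> b) \<otimes> a" using Suc.IH[OF Suc.prems(2,1) j] by simp
    also have "\<dots> = (a \<otimes> (b \<otimes> a) [^] j) \<otimes> b \<otimes> a" using ca by (simp add: m_assoc)
    also have "\<dots> = (a \<otimes> b) [^] j \<otimes> (a \<otimes> b) \<otimes> a" using ca by (simp add: mult_pow_swap m_assoc)
    finally show ?thesis using Suc ca by simp
  qed
qed

lemma wp_alternating_double: "a \<in> S \<Longrightarrow> b \<in> S \<Longrightarrow> wp (alternating a b (2 * k)) = (a \<otimes> b) [^] k"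
proof (induction k)
  case (Suc k)
  have ca: "a \<in> carrier W" "b \<in> carrier W" using Suc.prems S_carr by auto
  have "alternating a b (2 * Suc k) = a # b # alternating a b (2 * k)" by (rule alternating_double_Suc)
  then have "wp (alternating a b (2 * Suc k)) = (a \<otimes> b) \<otimes> (a \<otimes> b) [^] k" using Suc ca by (simp add: m_assoc)
  also have "\<dots> = (a \<otimes> b) [^] Suc k" using ca by (rule nat_pow_Suc2[symmetric, OF m_closed])
  finally show ?case .
qed simp

lemma even_refl_count_alternating:
  assumes a: "a \<in> S" and b: "b \<in> S" and m: "(a \<otimes> b) [^] m = \<one>"
  shows "even (refl_count (alternating a b (2 * m)) r)"
proof -
  have ca: "a \<in> carrier W" "b \<in> carrier W" using a b S_carr by auto
  have "refl_count (alternating a b (2 * m)) r = card {i. i < 2 * m \<and> (a \<otimes> b) [^] i \<otimes> a = r}"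
    unfolding refl_count_def using word_refl_alternating[OF a b] by (metis (lifting) length_alternating)
  also have "\<dots> = 2 * card {i. i < m \<and> (a \<otimes> b) [^] i \<otimes> a = r}"
  proof (rule card_less_double_periodic)
    fix i
    have "(a \<otimes> b) [^] (i + m) = (a \<otimes> b) [^] i" using ca m by (simp add: nat_pow_mult[symmetric])
    then show "((a \<otimes> b) [^] (i + m) \<otimes> a = r) = ((a \<otimes> b) [^] i \<otimes> a = r)" by simp
  qed
  finally show ?thesis by simp
qed

subsection \<open>The reflection representation\<close>

abbreviation "AA \<equiv> R \<times> (UNIV :: bool set)"
abbreviation "BB \<equiv> BijGroup AA"

definition gen_perm :: "'w \<Rightarrow> 'w \<times> bool \<Rightarrow> 'w \<times> bool" where
  "gen_perm x = restrict (refl_step x) AA"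

lemma refl_step_AA: "x \<in> S \<Longrightarrow> a \<in> AA \<Longrightarrow> refl_step x a \<in> AA"
  using R_conj_Waff[of x "fst a"] S_Waff S_inv by (auto simp: refl_step_def)

lemma refl_step_AA2: "s \<in> S \<Longrightarrow> t \<in> S \<Longrightarrow> a \<in> AA \<Longrightarrow> refl_step s (refl_step t a) \<in> AA"
  using refl_step_AA by blast

lemma refl_step_involution: "x \<in> S \<Longrightarrow> a \<in> AA \<Longrightarrow> refl_step x (refl_step x a) = a"
proof -
  assume x: "x \<in> S" and a: "a \<in> AA"
  have c: "x \<in> carrier W" "fst a \<in> carrier W" using x a S_carr R_carr by auto
  have e1: "x \<otimes> (x \<otimes> fst a \<otimes> x) \<otimes> x = fst a" using c x by (simp add: m_assoc S_sq)
  have e2: "(x \<otimes> fst a \<otimes> x = x) = (fst a = x)"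
    using c x by (metis S_sq e1 m_assoc r_one)
  show ?thesis unfolding refl_step_def using e1 e2 by (auto simp: prod_eq_iff)
qed

lemma gen_perm_Bij: "x \<in> S \<Longrightarrow> gen_perm x \<in> Bij AA"
  unfolding Bij_def gen_perm_def
  by (auto intro!: bij_betwI[where g = "restrict (refl_step x) AA"] simp: refl_step_AA refl_step_involution)

lemma gen_perm_pow:
  assumes s: "s \<in> S" and t: "t \<in> S"
  shows "(gen_perm s \<otimes>\<^bsub>BB\<^esub> gen_perm t) [^]\<^bsub>BB\<^esub> k = restrict (refl_word_act (alternating t s (2 * k))) AA"
proof (induction k)
  case 0
  then show ?case by (simp add: BijGroup_def)
next
  case (Suc k)
  have st: "set (alternating t s n) \<subseteq> S" for n using set_alternating[of t s n] s t by auto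
  have X: "gen_perm s \<otimes>\<^bsub>BB\<^esub> gen_perm t = restrict (\<lambda>a. refl_step s (refl_step t a)) AA"
    using gen_perm_Bij[OF s] gen_perm_Bij[OF t] refl_step_AA[OF t]
    by (auto simp: BijGroup_def compose_def gen_perm_def)
  have B: "restrict (refl_word_act (alternating t s (2 * k))) AA \<in> Bij AA"
    using Suc.IH[symmetric] monoid.nat_pow_closed[OF group.is_monoid[OF group_BijGroup]] gen_perm_Bij s t
      monoid.m_closed[OF group.is_monoid[OF group_BijGroup]]
    by (metis (no_types, lifting) partial_object.select_convs(1) BijGroup_def)
  have XB: "restrict (\<lambda>a. refl_step s (refl_step t a)) AA \<in> Bij AA"
    using X gen_perm_Bij s t monoid.m_closed[OF group.is_monoid[OF group_BijGroup]]
    by (metis (no_types, lifting) partial_object.select_convs(1) BijGroup_def)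
  have "(gen_perm s \<otimes>\<^bsub>BB\<^esub> gen_perm t) [^]\<^bsub>BB\<^esub> Suc k
      = restrict (refl_word_act (alternating t s (2 * k))) AA \<otimes>\<^bsub>BB\<^esub> restrict (\<lambda>a. refl_step s (refl_step t a)) AA"
    by (subst monoid.nat_pow_Suc[OF group.is_monoid[OF group_BijGroup]]) (simp only: Suc.IH[unfolded X] X)
  also have "\<dots> = restrict (refl_word_act (alternating t s (2 * Suc k))) AA"
    using B XB refl_step_AA2[OF s t] s t by (auto simp: BijGroup_def compose_def alternating_double_Suc intro!: restrict_ext)
  finally show ?case .
qed

lemma pow_ord_Waff_grp:
  assumes s: "s \<in> S" and t: "t \<in> S"
  shows "(s \<otimes> t) [^] group.ord Waff_grp (s \<otimes> t) = \<one>"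
proof -
  have "s \<otimes> t \<in> Waff" using s t S_Waff subgroup.m_closed[OF sub_Waff] by blast
  then have "(s \<otimes> t) [^]\<^bsub>Waff_grp\<^esub> group.ord Waff_grp (s \<otimes> t) = \<one>\<^bsub>Waff_grp\<^esub>"
    using group.pow_ord_eq_1[OF group_Waff_grp] by simp
  then show ?thesis using nat_pow_consistent[of "s \<otimes> t" "group.ord Waff_grp (s \<otimes> t)" Waff] by simp
qed

lemma gen_perm_relation:
  assumes s: "s \<in> S" and t: "t \<in> S" and m: "(s \<otimes> t) [^] (m::nat) = \<one>"
  shows "(gen_perm s \<otimes>\<^bsub>BB\<^esub> gen_perm t) [^]\<^bsub>BB\<^esub> m = \<one>\<^bsub>BB\<^esub>"
proof -
  have st: "set (alternating t s n) \<subseteq> S" for n using set_alternating[of t s n] s t by auto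
  have P: "wp (alternating t s (2 * m)) = \<one>" using wp_alternating_double[OF t s] pow_swap_eq_one[OF S_carr[OF s] S_carr[OF t] m] by simp
  have "restrict (refl_word_act (alternating t s (2 * m))) AA = restrict (\<lambda>x. x) AA"
  proof (rule restrict_ext)
    fix a assume a: "a \<in> AA"
    obtain r e where re: "a = (r, e)" by fastforce
    have "r \<in> carrier W" using a re R_carr by auto
    then show "refl_word_act (alternating t s (2 * m)) a = a"
      using refl_word_act_eq[OF st] even_refl_count_alternating[OF t s pow_swap_eq_one[OF S_carr[OF s] S_carr[OF t] m]] P re by simp
  qed
  then show ?thesis using gen_perm_pow[OF s t] by (simp add: BijGroup_def)
qed

abbreviation "HH \<equiv> transport_group BB (graph_code AA)"

lemma carrier_BB[simp]: "carrier BB = Bij AA" by (simp add: BijGroup_def)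
lemma group_HH: "group HH" using transport_group(1)[OF group_BijGroup, of "graph_code AA" AA] inj_on_graph_code[of AA] by simp
lemma graph_code_hom: "graph_code AA \<in> hom BB HH" using transport_group(2)[OF group_BijGroup, of "graph_code AA" AA] inj_on_graph_code[of AA] by simp
lemma carrier_HH: "carrier HH = graph_code AA ` Bij AA" by (simp add: transport_group_def)
lemma graph_code_inv[simp]: "f \<in> Bij AA \<Longrightarrow> inv_into (Bij AA) (graph_code AA) (graph_code AA f) = f"
  by (rule inv_into_f_f[OF inj_on_graph_code])
lemma mult_HH: "a \<in> carrier HH \<Longrightarrow> b \<in> carrier HH \<Longrightarrow>
   a \<otimes>\<^bsub>HH\<^esub> b = graph_code AA (inv_into (Bij AA) (graph_code AA) a \<otimes>\<^bsub>BB\<^esub> inv_into (Bij AA) (graph_code AA) b)"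
  by (simp add: transport_group_def)
lemma one_HH: "\<one>\<^bsub>HH\<^esub> = graph_code AA \<one>\<^bsub>BB\<^esub>" by (simp add: transport_group_def)

lemma refl_rep_code_ex: "\<exists>\<phi>\<in>hom Waff_grp HH. \<forall>s\<in>S. \<phi> s = graph_code AA (gen_perm s)"
proof (rule coxeter_universal[OF group_HH])
  show "(\<lambda>x. graph_code AA (gen_perm x)) \<in> S \<rightarrow> carrier HH" using gen_perm_Bij by (auto simp: carrier_HH)
  show "\<forall>s\<in>S. \<forall>t\<in>S. group.ord Waff_grp (s \<otimes> t) \<noteq> 0 \<longrightarrow>
     (graph_code AA (gen_perm s) \<otimes>\<^bsub>HH\<^esub> graph_code AA (gen_perm t)) [^]\<^bsub>HH\<^esub> group.ord Waff_grp (s \<otimes> t) = \<one>\<^bsub>HH\<^esub>"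
  proof (intro ballI impI)
    fix s t assume s: "s \<in> S" and t: "t \<in> S"
    let ?m = "group.ord Waff_grp (s \<otimes> t)"
    have c: "gen_perm s \<in> carrier BB" "gen_perm t \<in> carrier BB" using gen_perm_Bij s t by auto
    have cc: "gen_perm s \<otimes>\<^bsub>BB\<^esub> gen_perm t \<in> carrier BB"
      using c monoid.m_closed[OF group.is_monoid[OF group_BijGroup]] by blast
    have 1: "graph_code AA (gen_perm s) \<otimes>\<^bsub>HH\<^esub> graph_code AA (gen_perm t) = graph_code AA (gen_perm s \<otimes>\<^bsub>BB\<^esub> gen_perm t)"
      using graph_code_hom c by (simp add: hom_mult)
    have 2: "(graph_code AA (gen_perm s \<otimes>\<^bsub>BB\<^esub> gen_perm t)) [^]\<^bsub>HH\<^esub> ?m = graph_code AA ((gen_perm s \<otimes>\<^bsub>BB\<^esub> gen_perm t) [^]\<^bsub>BB\<^esub> ?m)"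
      using hom_nat_pow[OF graph_code_hom cc group_BijGroup group_HH] by simp
    have 3: "graph_code AA ((gen_perm s \<otimes>\<^bsub>BB\<^esub> gen_perm t) [^]\<^bsub>BB\<^esub> ?m) = graph_code AA \<one>\<^bsub>BB\<^esub>" using gen_perm_relation[OF s t pow_ord_Waff_grp[OF s t]] by simp
    from 1 2 3 show "(graph_code AA (gen_perm s) \<otimes>\<^bsub>HH\<^esub> graph_code AA (gen_perm t)) [^]\<^bsub>HH\<^esub> ?m = \<one>\<^bsub>HH\<^esub>"
      by (simp add: one_HH)
  qed
qed

definition "refl_rep_code = (SOME \<phi>. \<phi> \<in> hom Waff_grp HH \<and> (\<forall>s\<in>S. \<phi> s = graph_code AA (gen_perm s)))"
definition "refl_rep v = inv_into (Bij AA) (graph_code AA) (refl_rep_code v)"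

lemma refl_rep_code: "refl_rep_code \<in> hom Waff_grp HH" "\<And>s. s \<in> S \<Longrightarrow> refl_rep_code s = graph_code AA (gen_perm s)"
  using someI_ex[OF refl_rep_code_ex[unfolded Bex_def]] unfolding refl_rep_code_def by auto

lemma refl_rep_Bij: "v \<in> Waff \<Longrightarrow> refl_rep v \<in> Bij AA \<and> graph_code AA (refl_rep v) = refl_rep_code v"
proof -
  assume v: "v \<in> Waff"
  have "refl_rep_code v \<in> carrier HH" using refl_rep_code(1) v by (auto simp: hom_def)
  then obtain f where "f \<in> Bij AA" "refl_rep_code v = graph_code AA f" by (auto simp: carrier_HH)
  then show ?thesis by (simp add: refl_rep_def)
qed

lemma refl_rep_mult: "x \<in> Waff \<Longrightarrow> y \<in> Waff \<Longrightarrow> refl_rep (x \<otimes> y) = refl_rep x \<otimes>\<^bsub>BB\<^esub> refl_rep y"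
proof -
  assume x: "x \<in> Waff" and y: "y \<in> Waff"
  have "refl_rep_code (x \<otimes> y) = refl_rep_code x \<otimes>\<^bsub>HH\<^esub> refl_rep_code y" using refl_rep_code(1) x y hom_mult[of refl_rep_code Waff_grp HH x y] by simp
  also have "\<dots> = graph_code AA (refl_rep x \<otimes>\<^bsub>BB\<^esub> refl_rep y)"
    using mult_HH[of "refl_rep_code x" "refl_rep_code y"] refl_rep_code(1) x y by (simp add: refl_rep_def hom_def Pi_def)
  finally have "refl_rep (x \<otimes> y) = inv_into (Bij AA) (graph_code AA) (graph_code AA (refl_rep x \<otimes>\<^bsub>BB\<^esub> refl_rep y))" by (simp add: refl_rep_def)
  moreover have "refl_rep x \<otimes>\<^bsub>BB\<^esub> refl_rep y \<in> Bij AA"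
    using refl_rep_Bij[OF x] refl_rep_Bij[OF y] monoid.m_closed[OF group.is_monoid[OF group_BijGroup], of "refl_rep x" AA "refl_rep y"] by simp
  ultimately show ?thesis by simp
qed

lemma refl_rep_one: "refl_rep \<one> = \<one>\<^bsub>BB\<^esub>"
proof -
  have gh: "group_hom Waff_grp HH refl_rep_code" by (simp add: group_hom_def group_hom_axioms_def group_Waff_grp group_HH refl_rep_code(1))
  have "refl_rep_code \<one>\<^bsub>Waff_grp\<^esub> = \<one>\<^bsub>HH\<^esub>" by (rule group_hom.hom_one[OF gh])
  then have "refl_rep_code \<one> = graph_code AA \<one>\<^bsub>BB\<^esub>" by (simp add: one_HH)
  moreover have "\<one>\<^bsub>BB\<^esub> \<in> Bij AA" using monoid.one_closed[OF group.is_monoid[OF group_BijGroup], of AA] by simp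
  ultimately show ?thesis by (simp add: refl_rep_def)
qed

lemma refl_rep_S: "s \<in> S \<Longrightarrow> refl_rep s = gen_perm s"
  using refl_rep_code(2) gen_perm_Bij by (simp add: refl_rep_def)

lemma refl_rep_wp: "set xs \<subseteq> S \<Longrightarrow> a \<in> AA \<Longrightarrow> refl_rep (wp (rev xs)) a = refl_word_act xs a"
proof (induction xs arbitrary: a)
  case Nil
  then show ?case by (simp add: refl_rep_one BijGroup_def)
next
  case (Cons x xs)
  have x: "x \<in> S" and xs: "set xs \<subseteq> S" using Cons.prems by auto
  have "wp (rev (x # xs)) = wp (rev xs) \<otimes> x" using x xs by (simp add: wp_append S_carr)
  then have "refl_rep (wp (rev (x # xs))) = refl_rep (wp (rev xs)) \<otimes>\<^bsub>BB\<^esub> gen_perm x"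
    using refl_rep_mult[of "wp (rev xs)" x] wp_Waff[of "rev xs"] xs x S_Waff refl_rep_S by auto
  also have "\<dots> = compose AA (refl_rep (wp (rev xs))) (gen_perm x)"
    using refl_rep_Bij[of "wp (rev xs)"] wp_Waff[of "rev xs"] xs gen_perm_Bij[OF x] by (simp add: BijGroup_def)
  finally show ?case using Cons.IH[OF xs] refl_step_AA[OF x Cons.prems(2)] Cons.prems(2)
    by (simp add: compose_def gen_perm_def)
qed

theorem odd_refl_count_eq:
  assumes xs: "set xs \<subseteq> S" and ys: "set ys \<subseteq> S" and eq: "wp xs = wp ys" and r: "r \<in> R"
  shows "odd (refl_count xs r) = odd (refl_count ys r)"
proof -
  have "wp (rev xs) = wp (rev ys)" using wp_rev xs ys eq by metis
  then have "refl_word_act xs (r, False) = refl_word_act ys (r, False)"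
    using refl_rep_wp[OF xs, of "(r, False)"] refl_rep_wp[OF ys, of "(r, False)"] r by simp
  then show ?thesis using refl_word_act_eq[OF xs] refl_word_act_eq[OF ys] r R_carr by simp
qed

subsection \<open>Reflection parity and the exchange condition\<close>

text \<open>This is \<open>\<eta>(v, r)\<close>; by \<open>odd_refl_count_eq\<close> it does not depend on the chosen word.\<close>

definition refl_parity :: "'w \<Rightarrow> 'w \<Rightarrow> bool" where
  "refl_parity v r = odd (refl_count (SOME xs. set xs \<subseteq> S \<and> wp xs = v) r)"

lemma refl_parity_wp: "set xs \<subseteq> S \<Longrightarrow> r \<in> R \<Longrightarrow> refl_parity (wp xs) r = odd (refl_count xs r)"
proof -
  assume xs: "set xs \<subseteq> S" and r: "r \<in> R"
  let ?ys = "SOME ys. set ys \<subseteq> S \<and> wp ys = wp xs"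
  have "set ?ys \<subseteq> S \<and> wp ?ys = wp xs" using someI[of "\<lambda>ys. set ys \<subseteq> S \<and> wp ys = wp xs" xs] xs by blast
  then show ?thesis unfolding refl_parity_def using odd_refl_count_eq[OF _ xs _ r] by blast
qed

lemma refl_count_append:
  "set xs \<subseteq> S \<Longrightarrow> set ys \<subseteq> S \<Longrightarrow> r \<in> carrier W \<Longrightarrow>
    refl_count (xs @ ys) r = refl_count xs r + refl_count ys (inv (wp xs) \<otimes> r \<otimes> wp xs)"
proof (induction xs arbitrary: r)
  case Nil
  then show ?case by (simp add: refl_count_def)
next
  case (Cons x xs)
  have x: "x \<in> S" and xs: "set xs \<subseteq> S" using Cons.prems by auto
  have xc: "x \<in> carrier W" using x S_carr by auto
  have rc: "x \<otimes> r \<otimes> x \<in> carrier W" using xc Cons.prems by auto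
  have "refl_count ((x # xs) @ ys) r = (if r = x then 1 else 0) + refl_count (xs @ ys) (x \<otimes> r \<otimes> x)"
    using refl_count_Cons[OF x _ Cons.prems(3), of "xs @ ys"] xs Cons.prems(2) by simp
  also have "\<dots> = (if r = x then 1 else 0) + refl_count xs (x \<otimes> r \<otimes> x) + refl_count ys (inv (wp xs) \<otimes> (x \<otimes> r \<otimes> x) \<otimes> wp xs)"
    using Cons.IH[OF xs Cons.prems(2) rc] by simp
  also have "inv (wp xs) \<otimes> (x \<otimes> r \<otimes> x) \<otimes> wp xs = inv (wp (x # xs)) \<otimes> r \<otimes> wp (x # xs)"
    using xc xs Cons.prems by (simp add: inv_mult_group S_inv[OF x] m_assoc)
  finally show ?case using refl_count_Cons[OF x xs Cons.prems(3)] by simp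
qed

lemma inv_Waff: "x \<in> Waff \<Longrightarrow> inv x \<in> Waff" using subgroup.m_inv_closed[OF sub_Waff] by blast
lemma mult_Waff: "x \<in> Waff \<Longrightarrow> y \<in> Waff \<Longrightarrow> x \<otimes> y \<in> Waff" using subgroup.m_closed[OF sub_Waff] by blast

lemma R_conj_inv_Waff: "x \<in> Waff \<Longrightarrow> r \<in> R \<Longrightarrow> inv x \<otimes> r \<otimes> x \<in> R"
  using R_conj_Waff[of "inv x" r] inv_Waff Waff_carr by auto

lemma refl_parity_mult:
  assumes x: "x \<in> Waff" and y: "y \<in> Waff" and r: "r \<in> R"
  shows "refl_parity (x \<otimes> y) r = (refl_parity x r \<noteq> refl_parity y (inv x \<otimes> r \<otimes> x))"
proof -
  obtain xs ys where xs: "set xs \<subseteq> S" "wp xs = x" and ys: "set ys \<subseteq> S" "wp ys = y"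
    using Waff_wp x y by metis
  have "x \<otimes> y = wp (xs @ ys)" using xs ys by (simp add: wp_append)
  then have "refl_parity (x \<otimes> y) r = odd (refl_count (xs @ ys) r)" using refl_parity_wp[of "xs @ ys" r] xs ys r by simp
  also have "\<dots> = odd (refl_count xs r + refl_count ys (inv x \<otimes> r \<otimes> x))"
    using refl_count_append[OF xs(1) ys(1)] r R_carr xs by simp
  finally show ?thesis using refl_parity_wp[OF xs(1) r] refl_parity_wp[OF ys(1) R_conj_inv_Waff[OF x r]] xs ys by simp
qed

lemma refl_parity_one: "r \<in> R \<Longrightarrow> \<not> refl_parity \<one> r"
  using refl_parity_wp[of "[]" r] by (simp add: refl_count_def)

lemma refl_parity_S: "s \<in> S \<Longrightarrow> refl_parity s s"
proof -
  assume s: "s \<in> S"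
  have "refl_count [s] s = 1" using refl_count_Cons[OF s, of "[]" s] S_carr s by (simp add: refl_count_def)
  then show ?thesis using refl_parity_wp[of "[s]" s] s S_R S_carr by simp
qed

lemma refl_parity_self: "t \<in> R \<Longrightarrow> refl_parity t t"
proof -
  assume t: "t \<in> R"
  then obtain a s where ta: "t = a \<otimes> s \<otimes> inv a" "a \<in> Waff" "s \<in> S" by (auto simp: R_iff)
  have c: "a \<in> carrier W" "s \<in> carrier W" using ta Waff_carr S_carr by auto
  have sW: "s \<in> Waff" "s \<in> R" using ta S_Waff S_R by auto
  have ia: "inv a \<in> Waff" using inv_Waff ta by auto
  have e1: "inv a \<otimes> t \<otimes> a = s" using ta c by (simp add: m_assoc)
  have e2: "inv s \<otimes> s \<otimes> s = s" using c ta by simp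
  have "refl_parity (a \<otimes> (s \<otimes> inv a)) t = (refl_parity a t \<noteq> refl_parity (s \<otimes> inv a) s)"
    using refl_parity_mult[OF ta(2) mult_Waff[OF sW(1) ia] t] e1 by simp
  also have "refl_parity (s \<otimes> inv a) s = (refl_parity s s \<noteq> refl_parity (inv a) s)"
    using refl_parity_mult[OF sW(1) ia sW(2)] e2 by simp
  also have "refl_parity a t = refl_parity (inv a) s"
  proof -
    have "refl_parity (a \<otimes> inv a) t = (refl_parity a t \<noteq> refl_parity (inv a) s)" using refl_parity_mult[OF ta(2) ia t] e1 by simp
    moreover have "\<not> refl_parity (a \<otimes> inv a) t" using refl_parity_one t c by simp
    ultimately show ?thesis by simp
  qed
  finally show ?thesis using ta refl_parity_S[OF ta(3)] c by (simp add: m_assoc)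
qed

lemma refl_parity_refl_mult: "t \<in> R \<Longrightarrow> v \<in> Waff \<Longrightarrow> refl_parity (t \<otimes> v) t = (\<not> refl_parity v t)"
  using refl_parity_mult[of t v t] R_Waff refl_parity_self R_inv R_sq R_carr by (simp add: m_assoc)

lemma word_refl_mult_wp:
  assumes xs: "set xs \<subseteq> S" and i: "i < length xs"
  shows "word_refl xs i \<otimes> wp xs = wp (take i xs @ drop (Suc i) xs)"
proof -
  have x: "xs ! i \<in> S" using xs i nth_mem by blast
  have "wp xs = wp (take i xs @ xs ! i # drop (Suc i) xs)" using id_take_nth_drop[OF i] by simp
  also have "\<dots> = wp (take i xs) \<otimes> (xs ! i \<otimes> wp (drop (Suc i) xs))"
    using xs x by (simp add: wp_append order_trans[OF set_take_subset] order_trans[OF set_drop_subset])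
  finally have "word_refl xs i \<otimes> wp xs = wp (take i xs) \<otimes> xs ! i \<otimes> inv (wp (take i xs)) \<otimes> (wp (take i xs) \<otimes> (xs ! i \<otimes> wp (drop (Suc i) xs)))"
    by (simp add: word_refl_def)
  also have "\<dots> = wp (take i xs) \<otimes> wp (drop (Suc i) xs)" using xs i x by (simp add: m_assoc S_carr)
  finally show ?thesis
    using xs by (simp add: wp_append order_trans[OF set_take_subset] order_trans[OF set_drop_subset])
qed

lemma set_delete: "set xs \<subseteq> S \<Longrightarrow> set (take i xs @ drop (Suc i) xs) \<subseteq> S"
  by (auto dest: in_set_takeD in_set_dropD)

lemma len_word_refl_mult_less: "set xs \<subseteq> S \<Longrightarrow> i < length xs \<Longrightarrow> len (word_refl xs i \<otimes> wp xs) < length xs"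
proof -
  assume xs: "set xs \<subseteq> S" and i: "i < length xs"
  have "len (word_refl xs i \<otimes> wp xs) \<le> length (take i xs @ drop (Suc i) xs)"
    using word_refl_mult_wp[OF xs i] len_le_length[OF set_delete[OF xs]] by simp
  then show ?thesis using i by simp
qed

lemma word_refl_delete: "i < j \<Longrightarrow> j < length xs \<Longrightarrow> word_refl (take j xs @ drop (Suc j) xs) i = word_refl xs i"
  by (simp add: word_refl_def nth_append min_def)

lemma reduced_word_refl_distinct:
  assumes red: "reduced_word W S v xs" and ij: "i < j" "j < length xs"
  shows "word_refl xs i \<noteq> word_refl xs j"
proof
  assume eq: "word_refl xs i = word_refl xs j"
  have xs: "set xs \<subseteq> S" "wp xs = v" "length xs = len v" using reducedD[OF red] by auto
  let ?ys = "take j xs @ drop (Suc j) xs"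
  have ys: "set ?ys \<subseteq> S" using set_delete xs by blast
  have ly: "length ?ys = length xs - 1" using ij by simp
  define zs where "zs = take i ?ys @ drop (Suc i) ?ys"
  have "word_refl xs j \<otimes> v = wp ?ys" using word_refl_mult_wp[OF xs(1) ij(2)] xs by simp
  moreover have "word_refl ?ys i \<otimes> wp ?ys = wp zs" unfolding zs_def using word_refl_mult_wp[OF ys] ij ly by simp
  moreover have "word_refl ?ys i = word_refl xs j" using word_refl_delete ij eq by simp
  ultimately have 1: "word_refl xs j \<otimes> (word_refl xs j \<otimes> v) = wp zs" by simp
  have tR: "word_refl xs j \<in> R" using word_refl_R xs ij by simp
  have vc: "v \<in> carrier W" using xs wp_carr by blast
  have "word_refl xs j \<otimes> (word_refl xs j \<otimes> v) = v" using tR R_sq[OF tR] R_carr[OF tR] vc by (metis l_one m_assoc)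
  with 1 have "v = wp zs" by simp
  moreover have "set zs \<subseteq> S" unfolding zs_def using set_delete[OF ys] .
  ultimately have "len v \<le> length zs" using len_le_length by simp
  moreover have "length zs = length xs - 2" unfolding zs_def using ij by simp
  ultimately show False using ij xs by simp
qed

lemma refl_parity_reduced:
  assumes red: "reduced_word W S v xs" and r: "r \<in> R"
  shows "refl_parity v r = (\<exists>i<length xs. word_refl xs i = r)"
proof -
  have xs: "set xs \<subseteq> S" "wp xs = v" using reducedD[OF red] by auto
  let ?A = "{i. i < length xs \<and> word_refl xs i = r}"
  have le: "card ?A \<le> Suc 0"
    using reduced_word_refl_distinct[OF red] by (subst card_le_Suc0_iff_eq) (auto, metis linorder_neqE_nat)
  have fin: "finite ?A" by simp
  have c: "card ?A = 0 \<or> card ?A = 1" using le by linarith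
  have c1: "?A \<noteq> {} \<Longrightarrow> card ?A = 1" using c card_0_eq[OF fin] by blast
  have c0: "?A = {} \<Longrightarrow> card ?A = 0" by (simp only: card.empty)
  have odd_eq: "odd (card ?A) = (?A \<noteq> {})" by (metis c0 c1 odd_one even_zero)
  have "refl_parity v r = odd (card ?A)" using refl_parity_wp[OF xs(1) r] xs(2) by (simp add: refl_count_def)
  also have "\<dots> = (?A \<noteq> {})" by (rule odd_eq)
  also have "\<dots> = (\<exists>i<length xs. word_refl xs i = r)" by auto
  finally show ?thesis .
qed

definition inversions :: "'w \<Rightarrow> 'w set" where
  "inversions v = {r \<in> R. len (r \<otimes> v) < len v}"

lemma inversions_iff_word_refl:
  assumes red: "reduced_word W S v xs" and r: "r \<in> R"
  shows "(r \<in> inversions v) = (\<exists>i<length xs. word_refl xs i = r)"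
proof
  have xs: "set xs \<subseteq> S" "wp xs = v" "length xs = len v" using reducedD[OF red] by auto
  show "\<exists>i<length xs. word_refl xs i = r \<Longrightarrow> r \<in> inversions v" using len_word_refl_mult_less[OF xs(1)] xs r by (auto simp: inversions_def)
  assume N: "r \<in> inversions v"
  show "\<exists>i<length xs. word_refl xs i = r"
  proof (rule ccontr)
    assume "\<not> (\<exists>i<length xs. word_refl xs i = r)"
    then have "\<not> refl_parity v r" using refl_parity_reduced[OF red r] by simp
    moreover have v: "v \<in> Waff" using xs wp_Waff by auto
    ultimately have "refl_parity (r \<otimes> v) r" using refl_parity_refl_mult[OF r] by simp
    moreover have rv: "r \<otimes> v \<in> Waff" using v r R_Waff mult_Waff by auto
    moreover obtain ys where ys: "reduced_word W S (r \<otimes> v) ys" using reduced_word_ex rv by blast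
    ultimately obtain j where j: "j < length ys" "word_refl ys j = r" using refl_parity_reduced[OF ys r] by auto
    have "len (r \<otimes> (r \<otimes> v)) < len (r \<otimes> v)" using len_word_refl_mult_less[of ys j] j reducedD[OF ys] by auto
    moreover have "r \<otimes> (r \<otimes> v) = v" using r v R_sq R_carr Waff_carr by (simp add: m_assoc[symmetric])
    ultimately show False using N by (simp add: inversions_def)
  qed
qed

lemma inversions_reduced_word: "reduced_word W S v xs \<Longrightarrow> inversions v = word_refl xs ` {..<length xs}"
proof -
  assume red: "reduced_word W S v xs"
  have "word_refl xs i \<in> R" if "i < length xs" for i using word_refl_R reducedD[OF red] that by blast
  then show ?thesis using inversions_iff_word_refl[OF red] by (auto simp: inversions_def[of v] image_iff)
qed

lemma inversions_iff_refl_parity: "v \<in> Waff \<Longrightarrow> r \<in> R \<Longrightarrow> (r \<in> inversions v) = refl_parity v r"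
  using reduced_word_ex inversions_iff_word_refl refl_parity_reduced by metis

lemma finite_inversions: "v \<in> Waff \<Longrightarrow> finite (inversions v)"
  using reduced_word_ex inversions_reduced_word by (metis finite_imageI finite_lessThan)

lemma inversions_R: "inversions v \<subseteq> R" by (auto simp: inversions_def)

lemma sep_one_inversions: "v \<in> Waff \<Longrightarrow> sep_one W S v = inversions v"
proof
  assume v: "v \<in> Waff"
  show "sep_one W S v \<subseteq> inversions v"
    using inversions_reduced_word by (auto simp: sep_one_def word_refl_def[symmetric])
  show "inversions v \<subseteq> sep_one W S v"
  proof
    fix r assume r: "r \<in> inversions v"
    obtain xs where red: "reduced_word W S v xs" using reduced_word_ex v by blast
    then obtain i where "i < length xs" "word_refl xs i = r" using inversions_iff_word_refl[OF red] r inversions_R by blast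
    then show "r \<in> sep_one W S v" using red unfolding sep_one_def word_refl_def by blast
  qed
qed

lemma mult_S_S: "v \<in> carrier W \<Longrightarrow> s \<in> S \<Longrightarrow> v \<otimes> s \<otimes> s = v"
  by (simp add: m_assoc S_sq S_carr)

lemma len_mult_S_cases:
  assumes v: "v \<in> Waff" and s: "s \<in> S"
  shows "(len (v \<otimes> s) = Suc (len v) \<and> v \<otimes> s \<otimes> inv v \<notin> inversions v) \<or>
         (len v = Suc (len (v \<otimes> s)) \<and> v \<otimes> s \<otimes> inv v \<in> inversions v)"
proof -
  let ?r = "v \<otimes> s \<otimes> inv v"
  have c: "v \<in> carrier W" "s \<in> carrier W" using v s Waff_carr S_carr by auto
  have rR: "?r \<in> R" using R_conj_Waff[OF v S_R[OF s]] .
  have rv: "?r \<otimes> v = v \<otimes> s" using c by (simp add: m_assoc)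
  have rvs: "?r \<otimes> (v \<otimes> s) = v" using c s by (simp add: m_assoc S_sq)
  have vs: "v \<otimes> s \<in> Waff" using v s S_Waff mult_Waff by auto
  have NV: "(?r \<in> inversions v) = (len (v \<otimes> s) < len v)" using rR rv by (simp add: inversions_def)
  have NVS: "(?r \<in> inversions (v \<otimes> s)) = (len v < len (v \<otimes> s))" using rR rvs by (simp add: inversions_def)
  have "(?r \<in> inversions (v \<otimes> s)) = (\<not> ?r \<in> inversions v)"
    using inversions_iff_refl_parity[OF vs rR] inversions_iff_refl_parity[OF v rR] refl_parity_refl_mult[OF rR v] rv by simp
  then have ne: "len v \<noteq> len (v \<otimes> s)" using NV NVS by auto
  have b1: "len (v \<otimes> s) \<le> len v + 1" using len_mult_S[OF v s] .
  have b2: "len v \<le> len (v \<otimes> s) + 1" using len_mult_S[OF vs s] mult_S_S[OF c(1) s] by simp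
  show ?thesis using ne b1 b2 NV by auto
qed

lemma len_mult_S_up: "v \<in> Waff \<Longrightarrow> s \<in> S \<Longrightarrow> len v < len (v \<otimes> s) \<Longrightarrow> len (v \<otimes> s) = Suc (len v) \<and> v \<otimes> s \<otimes> inv v \<notin> inversions v"
  using len_mult_S_cases by fastforce

lemma len_mult_S_down: "v \<in> Waff \<Longrightarrow> s \<in> S \<Longrightarrow> len (v \<otimes> s) < len v \<Longrightarrow> len v = Suc (len (v \<otimes> s)) \<and> v \<otimes> s \<otimes> inv v \<in> inversions v"
  using len_mult_S_cases by fastforce

lemma len_mult_S_neq: "v \<in> Waff \<Longrightarrow> s \<in> S \<Longrightarrow> len (v \<otimes> s) \<noteq> len v"
  using len_mult_S_cases by fastforce

lemma inversions_mult_S_up: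
  assumes v: "v \<in> Waff" and s: "s \<in> S" and l: "len (v \<otimes> s) = Suc (len v)"
  shows "inversions (v \<otimes> s) = insert (v \<otimes> s \<otimes> inv v) (inversions v)"
proof -
  obtain xs where red: "reduced_word W S v xs" using reduced_word_ex v by blast
  have xs: "set xs \<subseteq> S" "wp xs = v" "length xs = len v" using reducedD[OF red] by auto
  have red2: "reduced_word W S (v \<otimes> s) (xs @ [s])"
    using xs s l by (simp add: reduced_word_def wp_append S_carr)
  have t1: "word_refl (xs @ [s]) i = word_refl xs i" if "i < length xs" for i
    using that by (simp add: word_refl_def nth_append)
  have t2: "word_refl (xs @ [s]) (length xs) = v \<otimes> s \<otimes> inv v" using xs(2) by (simp add: word_refl_def nth_append)
  have "{..<length (xs @ [s])} = insert (length xs) {..<length xs}" by auto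
  then have "inversions (v \<otimes> s) = insert (word_refl (xs @ [s]) (length xs)) (word_refl (xs @ [s]) ` {..<length xs})"
    using inversions_reduced_word[OF red2] by simp
  also have "word_refl (xs @ [s]) ` {..<length xs} = word_refl xs ` {..<length xs}" using t1 by auto
  finally show ?thesis using t2 inversions_reduced_word[OF red] by simp
qed

lemma inversions_S_mult_up:
  assumes v: "v \<in> Waff" and s: "s \<in> S" and l: "len (s \<otimes> v) = Suc (len v)"
  shows "inversions (s \<otimes> v) = insert s ((\<lambda>r. s \<otimes> r \<otimes> s) ` inversions v)"
proof -
  obtain xs where red: "reduced_word W S v xs" using reduced_word_ex v by blast
  have xs: "set xs \<subseteq> S" "wp xs = v" "length xs = len v" using reducedD[OF red] by auto
  have red2: "reduced_word W S (s \<otimes> v) (s # xs)"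
    using xs s l by (simp add: reduced_word_def)
  have "{..<length (s # xs)} = insert 0 (Suc ` {..<length xs})" by (auto simp: image_iff less_Suc_eq_0_disj)
  then have "inversions (s \<otimes> v) = insert (word_refl (s # xs) 0) ((\<lambda>i. word_refl (s # xs) (Suc i)) ` {..<length xs})"
    using inversions_reduced_word[OF red2] by (simp add: image_image)
  also have "(\<lambda>i. word_refl (s # xs) (Suc i)) ` {..<length xs} = (\<lambda>r. s \<otimes> r \<otimes> s) ` (word_refl xs ` {..<length xs})"
    using word_refl_Cons[OF s xs(1)] by (auto simp: image_iff)
  finally show ?thesis using word_refl_Cons_0[OF s] inversions_reduced_word[OF red] by simp
qed

lemma inversions_mult_S:
  assumes v: "v \<in> Waff" and s: "s \<in> S"
  shows "inversions (v \<otimes> s) = (inversions v - {v \<otimes> s \<otimes> inv v}) \<union> ({v \<otimes> s \<otimes> inv v} - inversions v)"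
proof (cases "len v < len (v \<otimes> s)")
  case True
  then show ?thesis using len_mult_S_up[OF v s] inversions_mult_S_up[OF v s] by auto
next
  case False
  then have lt: "len (v \<otimes> s) < len v" using len_mult_S_neq[OF v s] by linarith
  let ?v = "v \<otimes> s"
  have c: "v \<in> carrier W" "s \<in> carrier W" using v s Waff_carr S_carr by auto
  have vs: "?v \<in> Waff" using v s S_Waff mult_Waff by auto
  have e1: "?v \<otimes> s = v" using mult_S_S c s by simp
  have e2: "?v \<otimes> s \<otimes> inv ?v = v \<otimes> s \<otimes> inv v"
    using c s by (simp add: inv_mult_group S_inv m_assoc)
  have up: "len ?v < len (?v \<otimes> s)" using e1 lt by simp
  have "inversions v = insert (v \<otimes> s \<otimes> inv v) (inversions ?v)" and nin: "v \<otimes> s \<otimes> inv v \<notin> inversions ?v"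
    using inversions_mult_S_up[OF vs s] len_mult_S_up[OF vs s up] e1 e2 by auto
  then show ?thesis by auto
qed

subsection \<open>Conjugation by Omega and chambers\<close>

lemma conj_Waff: "x \<in> carrier W \<Longrightarrow> v \<in> Waff \<Longrightarrow> x \<otimes> v \<otimes> inv x \<in> Waff"
  using normal.inv_op_closed2[OF normal_Waff] by blast

lemma Om_inv: "u \<in> Om \<Longrightarrow> inv u \<in> Om" using subgroup.m_inv_closed[OF sub_Om] by blast
lemma Om_mult: "u \<in> Om \<Longrightarrow> u' \<in> Om \<Longrightarrow> u \<otimes> u' \<in> Om" using subgroup.m_closed[OF sub_Om] by blast
lemma Om_one: "\<one> \<in> Om" using subgroup.one_closed[OF sub_Om] .
lemma Waff_one: "\<one> \<in> Waff" using subgroup.one_closed[OF sub_Waff] .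

lemma wp_map_conj: "u \<in> carrier W \<Longrightarrow> set xs \<subseteq> S \<Longrightarrow> wp (map (\<lambda>x. u \<otimes> x \<otimes> inv u) xs) = u \<otimes> wp xs \<otimes> inv u"
proof (induction xs)
  case Nil
  then show ?case by simp
next
  case (Cons x xs)
  have c: "x \<in> carrier W" "wp xs \<in> carrier W" using Cons.prems S_carr by auto
  have "wp (map (\<lambda>x. u \<otimes> x \<otimes> inv u) (x # xs)) = u \<otimes> x \<otimes> inv u \<otimes> (u \<otimes> wp xs \<otimes> inv u)"
    using Cons by simp
  also have "\<dots> = u \<otimes> (x \<otimes> wp xs) \<otimes> inv u" using c Cons.prems by (simp add: m_assoc)
  finally show ?case by simp
qed

lemma len_conj_le: "u \<in> Om \<Longrightarrow> v \<in> Waff \<Longrightarrow> len (u \<otimes> v \<otimes> inv u) \<le> len v"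
proof -
  assume u: "u \<in> Om" and v: "v \<in> Waff"
  obtain xs where red: "reduced_word W S v xs" using reduced_word_ex v by blast
  have xs: "set xs \<subseteq> S" "wp xs = v" "length xs = len v" using reducedD[OF red] by auto
  have st: "set (map (\<lambda>x. u \<otimes> x \<otimes> inv u) xs) \<subseteq> S" using xs Om_conj_S u by auto
  have "len (wp (map (\<lambda>x. u \<otimes> x \<otimes> inv u) xs)) \<le> length (map (\<lambda>x. u \<otimes> x \<otimes> inv u) xs)"
    using len_le_length[OF st] .
  moreover have "wp (map (\<lambda>x. u \<otimes> x \<otimes> inv u) xs) = u \<otimes> v \<otimes> inv u" using wp_map_conj[OF Om_carr[OF u] xs(1)] xs(2) by simp
  ultimately show ?thesis using xs(3) by simp
qed

lemma len_conj: "u \<in> Om \<Longrightarrow> v \<in> Waff \<Longrightarrow> len (u \<otimes> v \<otimes> inv u) = len v"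
proof -
  assume u: "u \<in> Om" and v: "v \<in> Waff"
  have c: "u \<in> carrier W" "v \<in> carrier W" using u v Om_carr Waff_carr by auto
  have "inv u \<otimes> (u \<otimes> v \<otimes> inv u) \<otimes> inv (inv u) = v" using c by (simp add: m_assoc)
  then have "len v \<le> len (u \<otimes> v \<otimes> inv u)"
    using len_conj_le[OF Om_inv[OF u] conj_Waff[OF c(1) v]] by simp
  then show ?thesis using len_conj_le[OF u v] by simp
qed

lemma R_conj_Om: "u \<in> Om \<Longrightarrow> r \<in> R \<Longrightarrow> u \<otimes> r \<otimes> inv u \<in> R"
proof -
  assume u: "u \<in> Om" and "r \<in> R"
  then obtain a s where r: "r = a \<otimes> s \<otimes> inv a" "a \<in> Waff" "s \<in> S" by (auto simp: R_iff)
  have c: "a \<in> carrier W" "s \<in> carrier W" "u \<in> carrier W" using r u Waff_carr S_carr Om_carr by auto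
  have "u \<otimes> r \<otimes> inv u = (u \<otimes> a \<otimes> inv u) \<otimes> (u \<otimes> s \<otimes> inv u) \<otimes> inv (u \<otimes> a \<otimes> inv u)"
    using c r by (simp add: m_assoc inv_mult_group)
  moreover have "u \<otimes> a \<otimes> inv u \<in> Waff" using conj_Waff c r by auto
  ultimately show ?thesis using Om_conj_S[OF u r(3)] unfolding R_iff by blast
qed

lemma R_conj_W: "x \<in> carrier W \<Longrightarrow> r \<in> R \<Longrightarrow> x \<otimes> r \<otimes> inv x \<in> R"
proof -
  assume x: "x \<in> carrier W" and "r \<in> R"
  then obtain a s where r: "r = a \<otimes> s \<otimes> inv a" "a \<in> Waff" "s \<in> S" by (auto simp: R_iff)
  obtain v u where vu: "v \<in> Waff" "u \<in> Om" "x = v \<otimes> u" using Waff_Om_decomp[OF x] by blast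
  have c: "v \<in> carrier W" "u \<in> carrier W" using vu Waff_carr Om_carr by auto
  have "x \<otimes> r \<otimes> inv x = v \<otimes> (u \<otimes> r \<otimes> inv u) \<otimes> inv v"
    using c vu r S_carr Waff_carr by (simp add: m_assoc inv_mult_group)
  then show ?thesis using R_conj_Waff[OF vu(1) R_conj_Om[OF vu(2)]] \<open>r \<in> R\<close> by simp
qed

lemma inversions_conj_Om: "u \<in> Om \<Longrightarrow> v \<in> Waff \<Longrightarrow> inversions (u \<otimes> v \<otimes> inv u) = (\<lambda>r. u \<otimes> r \<otimes> inv u) ` inversions v"
proof -
  assume u: "u \<in> Om" and v: "v \<in> Waff"
  have c: "u \<in> carrier W" "v \<in> carrier W" using u v Om_carr Waff_carr by auto
  have key: "len (u \<otimes> r \<otimes> inv u \<otimes> (u \<otimes> v \<otimes> inv u)) = len (r \<otimes> v)" if r: "r \<in> R" for r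
  proof -
    have rc: "r \<in> carrier W" using r R_carr by auto
    have "u \<otimes> r \<otimes> inv u \<otimes> (u \<otimes> v \<otimes> inv u) = u \<otimes> (r \<otimes> v) \<otimes> inv u" using c rc by (simp add: m_assoc)
    then show ?thesis using len_conj[OF u] mult_Waff[OF R_Waff[OF r] v] by simp
  qed
  show ?thesis
  proof
    show "(\<lambda>r. u \<otimes> r \<otimes> inv u) ` inversions v \<subseteq> inversions (u \<otimes> v \<otimes> inv u)"
      using key R_conj_Om[OF u] len_conj[OF u v] by (auto simp: inversions_def)
    show "inversions (u \<otimes> v \<otimes> inv u) \<subseteq> (\<lambda>r. u \<otimes> r \<otimes> inv u) ` inversions v"
    proof
      fix r' assume r': "r' \<in> inversions (u \<otimes> v \<otimes> inv u)"
      let ?r = "inv u \<otimes> r' \<otimes> u"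
      have rR: "?r \<in> R" using R_conj_Om[OF Om_inv[OF u], of r'] r' c by (auto simp: inversions_def)
      have e: "u \<otimes> ?r \<otimes> inv u = r'" using c r' R_carr by (simp add: m_assoc inversions_def)
      have "?r \<in> inversions v" using key[OF rR] e r' len_conj[OF u v] rR by (simp add: inversions_def)
      then show "r' \<in> (\<lambda>r. u \<otimes> r \<otimes> inv u) ` inversions v" using e by force
    qed
  qed
qed

abbreviation "ch \<equiv> chamber W Waff Om"

lemma Waff_Om_unique: "v \<in> Waff \<Longrightarrow> v' \<in> Waff \<Longrightarrow> u \<in> Om \<Longrightarrow> u' \<in> Om \<Longrightarrow> v \<otimes> u = v' \<otimes> u' \<Longrightarrow> v = v'"
proof -
  assume v: "v \<in> Waff" and v': "v' \<in> Waff" and u: "u \<in> Om" and u': "u' \<in> Om" and e: "v \<otimes> u = v' \<otimes> u'"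
  have c: "v \<in> carrier W" "v' \<in> carrier W" "u \<in> carrier W" "u' \<in> carrier W" using v v' u u' Waff_carr Om_carr by auto
  have "inv v' \<otimes> v = u' \<otimes> inv u"
  proof -
    have "inv v' \<otimes> (v \<otimes> u) \<otimes> inv u = inv v' \<otimes> (v' \<otimes> u') \<otimes> inv u" using e by simp
    then show ?thesis using c by (simp add: m_assoc)
  qed
  moreover have "inv v' \<otimes> v \<in> Waff" using v v' inv_Waff mult_Waff by auto
  moreover have "u' \<otimes> inv u \<in> Om" using u u' Om_inv Om_mult by auto
  ultimately have e1: "inv v' \<otimes> v = \<one>" using Waff_Om_trivial by auto
  have "v = v' \<otimes> (inv v' \<otimes> v)" using c by simp
  also have "\<dots> = v'" using e1 c by simp
  finally show "v = v'" .
qed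

lemma chamber_mult_Om: "v \<in> Waff \<Longrightarrow> u \<in> Om \<Longrightarrow> ch (v \<otimes> u) = v"
  unfolding chamber_def
  by (rule the_equality) (auto intro: Waff_Om_unique[symmetric])

lemma chamber_props: "w \<in> carrier W \<Longrightarrow> ch w \<in> Waff \<and> (\<exists>u\<in>Om. w = ch w \<otimes> u)"
proof -
  assume w: "w \<in> carrier W"
  obtain v u where vu: "v \<in> Waff" "u \<in> Om" "w = v \<otimes> u" using Waff_Om_decomp[OF w] by blast
  then show ?thesis using chamber_mult_Om by auto
qed

lemma chamber_one: "ch \<one> = \<one>"
  using chamber_mult_Om[OF Waff_one Om_one] by simp

lemma chamber_Waff: "v \<in> Waff \<Longrightarrow> ch v = v"
  using chamber_mult_Om[OF _ Om_one] Waff_carr by simp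

lemma ext_len_eq: "ext_len W Waff S Om w = len (ch w)"
  by (simp add: ext_len_def)

lemma chamber_mult: "v \<in> Waff \<Longrightarrow> u \<in> Om \<Longrightarrow> w' \<in> carrier W \<Longrightarrow>
    ch (v \<otimes> u \<otimes> w') = v \<otimes> (u \<otimes> ch w' \<otimes> inv u)"
proof -
  assume v: "v \<in> Waff" and u: "u \<in> Om" and w': "w' \<in> carrier W"
  obtain u' where u': "u' \<in> Om" "w' = ch w' \<otimes> u'" and cw: "ch w' \<in> Waff" using chamber_props[OF w'] by blast
  have c: "v \<in> carrier W" "u \<in> carrier W" "u' \<in> carrier W" "ch w' \<in> carrier W"
    using v u u' cw Waff_carr Om_carr by auto
  have "v \<otimes> u \<otimes> w' = v \<otimes> u \<otimes> (ch w' \<otimes> u')" by (subst u'(2)[symmetric]) (rule refl)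
  also have "\<dots> = (v \<otimes> (u \<otimes> ch w' \<otimes> inv u)) \<otimes> (u \<otimes> u')"
    using c by (simp add: m_assoc)
  finally have "v \<otimes> u \<otimes> w' = (v \<otimes> (u \<otimes> ch w' \<otimes> inv u)) \<otimes> (u \<otimes> u')" .
  moreover have "v \<otimes> (u \<otimes> ch w' \<otimes> inv u) \<in> Waff" using mult_Waff[OF v conj_Waff[OF c(2) cw]] .
  ultimately show ?thesis using chamber_mult_Om Om_mult[OF u u'(1)] by simp
qed

abbreviation "elen \<equiv> ext_len W Waff S Om"

lemma chamber_carrier: "w \<in> carrier W \<Longrightarrow> ch w \<in> carrier W" using chamber_props Waff_carr by blast

lemma chamber_mult_S:
  assumes w: "w \<in> carrier W" and s: "s \<in> S"
  obtains u where "u \<in> Om" "w = ch w \<otimes> u" "u \<otimes> s \<otimes> inv u \<in> S"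
    "ch (w \<otimes> s) = ch w \<otimes> (u \<otimes> s \<otimes> inv u)"
    "w \<otimes> s \<otimes> inv w = ch w \<otimes> (u \<otimes> s \<otimes> inv u) \<otimes> inv (ch w)"
proof -
  obtain u where u: "u \<in> Om" "w = ch w \<otimes> u" and cw: "ch w \<in> Waff" using chamber_props[OF w] by blast
  have c: "u \<in> carrier W" "ch w \<in> carrier W" "s \<in> carrier W" using u cw Om_carr Waff_carr S_carr s by auto
  have "ch (w \<otimes> s) = ch (ch w \<otimes> u \<otimes> s)" using u(2) by simp
  also have "\<dots> = ch w \<otimes> (u \<otimes> s \<otimes> inv u)" using chamber_mult[OF cw u(1) c(3)] chamber_Waff[of s] S_Waff s by auto
  finally have 1: "ch (w \<otimes> s) = ch w \<otimes> (u \<otimes> s \<otimes> inv u)" .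
  have "w \<otimes> s \<otimes> inv w = ch w \<otimes> u \<otimes> s \<otimes> inv (ch w \<otimes> u)" using u(2) by simp
  also have "\<dots> = ch w \<otimes> (u \<otimes> s \<otimes> inv u) \<otimes> inv (ch w)" using c by (simp add: m_assoc inv_mult_group)
  finally show ?thesis using that u 1 Om_conj_S[OF u(1) s] by blast
qed

lemma elen_S: "s \<in> S \<Longrightarrow> elen s = 1"
proof -
  assume s: "s \<in> S"
  then have "s \<in> Waff" using S_Waff by auto
  then show ?thesis using chamber_Waff len_S[OF s] by (simp add: ext_len_eq)
qed

lemma elen_mult_S: "w \<in> carrier W \<Longrightarrow> s \<in> S \<Longrightarrow> elen (w \<otimes> s) = Suc (elen w) \<or> elen w = Suc (elen (w \<otimes> s))"
proof -
  assume w: "w \<in> carrier W" and s: "s \<in> S"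
  obtain u where u: "u \<in> Om" "u \<otimes> s \<otimes> inv u \<in> S" "ch (w \<otimes> s) = ch w \<otimes> (u \<otimes> s \<otimes> inv u)"
    using chamber_mult_S[OF w s] by metis
  show ?thesis using len_mult_S_cases[OF conjunct1[OF chamber_props[OF w]] u(2)] u(3) by (auto simp: ext_len_eq)
qed

lemma inversions_S: "s \<in> S \<Longrightarrow> inversions s = {s}"
proof -
  assume s: "s \<in> S"
  have "reduced_word W S s [s]" using s len_S S_carr by (simp add: reduced_word_def)
  then show ?thesis using inversions_reduced_word word_refl_Cons_0[OF s] by (simp add: lessThan_Suc)
qed

lemma inversions_one: "inversions \<one> = {}" by (simp add: inversions_def)

lemma separates_one_iff: "w \<in> carrier W \<Longrightarrow> H \<in> carrier W \<Longrightarrow> separates W Waff S Om H \<one> w \<longleftrightarrow> H \<in> inversions (ch w)"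
proof -
  assume w: "w \<in> carrier W" and H: "H \<in> carrier W"
  have "inv \<one> \<otimes> H \<otimes> \<one> = H" using H by simp
  then show ?thesis using w sep_one_inversions[OF conjunct1[OF chamber_props[OF w]]] chamber_one chamber_carrier
    by (simp add: separates_def Let_def)
qed

lemma separates_mult_iff:
  assumes w: "w \<in> carrier W" and w': "w' \<in> carrier W" and H: "H \<in> carrier W"
  shows "separates W Waff S Om H w (w \<otimes> w') \<longleftrightarrow> H \<in> (\<lambda>r. w \<otimes> r \<otimes> inv w) ` inversions (ch w')"
proof -
  obtain c u where u: "u \<in> Om" "w = c \<otimes> u" and cw: "c \<in> Waff" "ch w = c" using chamber_props[OF w] by blast
  have cw': "ch w' \<in> Waff" using chamber_props[OF w'] by blast
  have c: "u \<in> carrier W" "c \<in> carrier W" "ch w' \<in> carrier W" using u cw cw' Om_carr Waff_carr by auto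
  have "ch (w \<otimes> w') = ch (c \<otimes> u \<otimes> w')" using u(2) by simp
  also have "\<dots> = c \<otimes> (u \<otimes> ch w' \<otimes> inv u)" using chamber_mult[OF cw(1) u(1) w'] .
  finally have e: "inv (ch w) \<otimes> ch (w \<otimes> w') = u \<otimes> ch w' \<otimes> inv u" using c cw(2) by simp
  have y: "u \<otimes> ch w' \<otimes> inv u \<in> Waff" using conj_Waff[OF c(1) cw'] .
  have "separates W Waff S Om H w (w \<otimes> w') \<longleftrightarrow> inv (ch w) \<otimes> H \<otimes> ch w \<in> (\<lambda>r. u \<otimes> r \<otimes> inv u) ` inversions (ch w')"
    unfolding separates_def Let_def e sep_one_inversions[OF y] inversions_conj_Om[OF u(1) cw'] ..
  also have "\<dots> \<longleftrightarrow> H \<in> (\<lambda>r. w \<otimes> r \<otimes> inv w) ` inversions (ch w')"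
  proof
    assume "inv (ch w) \<otimes> H \<otimes> ch w \<in> (\<lambda>r. u \<otimes> r \<otimes> inv u) ` inversions (ch w')"
    then obtain r where r: "r \<in> inversions (ch w')" "inv c \<otimes> H \<otimes> c = u \<otimes> r \<otimes> inv u" using cw by blast
    have rc: "r \<in> carrier W" using r inversions_R R_carr by blast
    have "H = c \<otimes> (inv c \<otimes> H \<otimes> c) \<otimes> inv c" using H c by (simp add: m_assoc)
    also have "\<dots> = w \<otimes> r \<otimes> inv w" using r(2) u(2) c rc by (simp add: m_assoc inv_mult_group)
    finally show "H \<in> (\<lambda>r. w \<otimes> r \<otimes> inv w) ` inversions (ch w')" using r(1) by blast
  next
    assume "H \<in> (\<lambda>r. w \<otimes> r \<otimes> inv w) ` inversions (ch w')"
    then obtain r where r: "r \<in> inversions (ch w')" "H = w \<otimes> r \<otimes> inv w" by blast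
    have rc: "r \<in> carrier W" using r inversions_R R_carr by blast
    have "inv c \<otimes> H \<otimes> c = u \<otimes> r \<otimes> inv u" using r(2) u(2) c rc by (simp add: m_assoc inv_mult_group)
    then show "inv (ch w) \<otimes> H \<otimes> ch w \<in> (\<lambda>r. u \<otimes> r \<otimes> inv u) ` inversions (ch w')" using r(1) cw by auto
  qed
  finally show ?thesis .
qed

definition Xset :: "'w \<Rightarrow> 'w \<Rightarrow> 'w set" where
  "Xset w w' = {H \<in> R. separates W Waff S Om H \<one> w \<and> separates W Waff S Om H w (w \<otimes> w')}"

lemma Xset_eq: "w \<in> carrier W \<Longrightarrow> w' \<in> carrier W \<Longrightarrow> Xset w w' = inversions (ch w) \<inter> (\<lambda>r. w \<otimes> r \<otimes> inv w) ` inversions (ch w')"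
proof -
  assume w: "w \<in> carrier W" and w': "w' \<in> carrier W"
  have "H \<in> Xset w w' \<longleftrightarrow> H \<in> inversions (ch w) \<inter> (\<lambda>r. w \<otimes> r \<otimes> inv w) ` inversions (ch w')" for H
  proof (cases "H \<in> R")
    case True
    then show ?thesis using separates_one_iff[OF w R_carr[OF True]] separates_mult_iff[OF w w' R_carr[OF True]] by (simp add: Xset_def)
  next
    case False
    then show ?thesis using inversions_R by (auto simp: Xset_def)
  qed
  then show ?thesis by blast
qed

lemma finite_Xset: "w \<in> carrier W \<Longrightarrow> w' \<in> carrier W \<Longrightarrow> finite (Xset w w')"
  using Xset_eq finite_inversions chamber_props by (metis finite_Int)

lemma Xset_R: "Xset w w' \<subseteq> R" by (auto simp: Xset_def)

lemma XX_eq: "XX W Waff S Om w w' = (\<Sum>H \<in> Xset w w'. frag_of H)"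
  by (simp add: XX_def Xset_def)

lemma elen_Suc_split:
  assumes w': "w' \<in> carrier W" and l: "elen w' = Suc k"
  obtains s v u where "s \<in> S" "v \<in> Waff" "u \<in> Om" "w' = s \<otimes> (v \<otimes> u)"
    "len v = k" "len (s \<otimes> v) = Suc (len v)"
proof -
  obtain u where u: "u \<in> Om" "w' = ch w' \<otimes> u" and cw': "ch w' \<in> Waff" using chamber_props[OF w'] by blast
  obtain xs where "reduced_word W S (ch w') xs" using reduced_word_ex cw' by blast
  then have xs: "set xs \<subseteq> S" "wp xs = ch w'" "length xs = Suc k"
    using reducedD l by (auto simp: ext_len_eq)
  then obtain s ys where sys: "xs = s # ys" by (cases xs) auto
  have s: "s \<in> S" and ys: "set ys \<subseteq> S" using xs sys by auto
  have v: "wp ys \<in> Waff" using wp_Waff[OF ys] .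
  have cw'e: "ch w' = s \<otimes> wp ys" using xs sys by simp
  have "len (wp ys) \<le> k" using len_le_length[OF ys] xs sys by simp
  moreover have "Suc k \<le> len (wp ys) + 1" using len_S_mult[OF v s] cw'e xs l by (simp add: ext_len_eq)
  ultimately have lv: "len (wp ys) = k" by simp
  have "w' = s \<otimes> wp ys \<otimes> u" using u(2) unfolding cw'e .
  then have "w' = s \<otimes> (wp ys \<otimes> u)" using s v u(1) S_carr Waff_carr Om_carr by (simp add: m_assoc)
  with that s v u(1) lv show thesis using cw'e l by (simp add: ext_len_eq)
qed

lemma Xset_S_mult:
  assumes w: "w \<in> carrier W" and s: "s \<in> S" and v: "v \<in> Waff" and u: "u \<in> Om"
    and up: "len (s \<otimes> v) = Suc (len v)"
  shows "Xset w (s \<otimes> (v \<otimes> u)) = Xset w s \<union> Xset (w \<otimes> s) (v \<otimes> u)"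
    and "Xset w s \<inter> Xset (w \<otimes> s) (v \<otimes> u) = {}"
proof -
  have sc: "s \<in> carrier W" "s \<in> Waff" using s S_carr S_Waff by auto
  have c: "v \<in> carrier W" "u \<in> carrier W" using v u Waff_carr Om_carr by auto
  have ch_w': "ch (s \<otimes> (v \<otimes> u)) = s \<otimes> v"
    using chamber_mult_Om[OF mult_Waff[OF sc(2) v] u] sc c by (simp add: m_assoc)
  have ws: "w \<otimes> s \<in> carrier W" using w sc by simp
  let ?A = "inversions (ch w)" and ?r = "w \<otimes> s \<otimes> inv w"
  let ?B = "(\<lambda>x. (w \<otimes> s) \<otimes> x \<otimes> inv (w \<otimes> s)) ` inversions v"
  have Nv_c: "inversions v \<subseteq> carrier W" using inversions_R R_carr by blast
  have X1: "Xset w s = ?A \<inter> {?r}" using Xset_eq[OF w sc(1)] chamber_Waff[OF sc(2)] inversions_S[OF s] by simp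
  have "(\<lambda>r. w \<otimes> r \<otimes> inv w) ` inversions (s \<otimes> v)
      = insert ?r ((\<lambda>r. w \<otimes> r \<otimes> inv w) ` (\<lambda>r. s \<otimes> r \<otimes> s) ` inversions v)"
    using inversions_S_mult_up[OF v s up] by simp
  also have "(\<lambda>r. w \<otimes> r \<otimes> inv w) ` (\<lambda>r. s \<otimes> r \<otimes> s) ` inversions v = ?B"
    unfolding image_image using Nv_c w sc s
    by (intro image_cong refl) (auto simp: m_assoc inv_mult_group S_inv)
  finally have X2: "Xset w (s \<otimes> (v \<otimes> u)) = ?A \<inter> insert ?r ?B"
    using Xset_eq[OF w] sc c ch_w' by simp
  obtain u' where u': "u' \<in> Om" "u' \<otimes> s \<otimes> inv u' \<in> S"
      "ch (w \<otimes> s) = ch w \<otimes> (u' \<otimes> s \<otimes> inv u')"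
      "w \<otimes> s \<otimes> inv w = ch w \<otimes> (u' \<otimes> s \<otimes> inv u') \<otimes> inv (ch w)"
    using chamber_mult_S[OF w s] by metis
  have Nws: "inversions (ch (w \<otimes> s)) = (?A - {?r}) \<union> ({?r} - ?A)"
    using inversions_mult_S[OF conjunct1[OF chamber_props[OF w]] u'(2)] u'(3,4) by simp
  have "?r = (w \<otimes> s) \<otimes> s \<otimes> inv (w \<otimes> s)" using w sc s by (simp add: m_assoc inv_mult_group S_inv)
  moreover have "s \<notin> inversions v" using up by (simp add: inversions_def)
  ultimately have rB: "?r \<notin> ?B" using conj_mem_conj_image_iff[OF ws sc(1) Nv_c] by simp
  have "Xset (w \<otimes> s) (v \<otimes> u) = inversions (ch (w \<otimes> s)) \<inter> ?B"
    using Xset_eq[OF ws] chamber_mult_Om[OF v u] c by simp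
  also have "\<dots> = ((?A - {?r}) \<union> ({?r} - ?A)) \<inter> ?B" using Nws by simp
  also have "\<dots> = ?A \<inter> ?B" using rB by blast
  finally have X3: "Xset (w \<otimes> s) (v \<otimes> u) = ?A \<inter> ?B" .
  show "Xset w (s \<otimes> (v \<otimes> u)) = Xset w s \<union> Xset (w \<otimes> s) (v \<otimes> u)" using X1 X2 X3 by auto
  show "Xset w s \<inter> Xset (w \<otimes> s) (v \<otimes> u) = {}" using X1 X3 rB by auto
qed

end

locale ext_cox_extension = ext_cox W Waff S Om for W :: "'w monoid" (structure) and Waff S Om +
  fixes G :: "'g monoid" and T :: "'g set" and p :: "'g \<Rightarrow> 'w" and n :: "'w \<Rightarrow> 'g"
  assumes grpG: "group G"
    and hom_p: "p \<in> hom G W"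
    and kerT: "T = {g \<in> carrier G. p g = \<one>\<^bsub>W\<^esub>}"
    and abT: "comm_group (G\<lparr>carrier := T\<rparr>)"
    and sec: "\<forall>w\<in>carrier W. n w \<in> carrier G \<and> p (n w) = w"
    and nmult: "\<forall>w\<in>carrier W. \<forall>w'\<in>carrier W.
                 ext_len W Waff S Om (w \<otimes>\<^bsub>W\<^esub> w') = ext_len W Waff S Om w + ext_len W Waff S Om w'
                 \<longrightarrow> n (w \<otimes>\<^bsub>W\<^esub> w') = n w \<otimes>\<^bsub>G\<^esub> n w'"
begin

abbreviation gm (infixl "\<diamond>" 70) where "a \<diamond> b \<equiv> a \<otimes>\<^bsub>G\<^esub> b"
abbreviation "gi \<equiv> m_inv G"
abbreviation "g1 \<equiv> \<one>\<^bsub>G\<^esub>"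

sublocale G: group G by (rule grpG)

lemma group_hom_p: "group_hom G W p"
  using grpG hom_p is_group by (simp add: group_hom_def group_hom_axioms_def)

lemma T_carr: "t \<in> T \<Longrightarrow> t \<in> carrier G" using kerT by auto

lemma T_comm: "a \<in> T \<Longrightarrow> b \<in> T \<Longrightarrow> a \<diamond> b = b \<diamond> a"
  using comm_monoid.m_comm[OF comm_group.axioms(1)[OF abT], of a b] by simp

lemma p_mult: "a \<in> carrier G \<Longrightarrow> b \<in> carrier G \<Longrightarrow> p (a \<diamond> b) = p a \<otimes> p b"
  using hom_p by (simp add: hom_mult)
lemma p_inv: "a \<in> carrier G \<Longrightarrow> p (gi a) = inv (p a)"
  using group_hom.hom_inv[OF group_hom_p] by simp
lemma p_carr: "a \<in> carrier G \<Longrightarrow> p a \<in> carrier W"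
  using hom_p by (auto simp: hom_def)

lemma T_iff: "t \<in> T \<longleftrightarrow> t \<in> carrier G \<and> p t = \<one>" using kerT by auto

lemma n_carr: "w \<in> carrier W \<Longrightarrow> n w \<in> carrier G" using sec by auto
lemma p_n: "w \<in> carrier W \<Longrightarrow> p (n w) = w" using sec by auto

lemma n_mult: "w \<in> carrier W \<Longrightarrow> w' \<in> carrier W \<Longrightarrow> elen (w \<otimes> w') = elen w + elen w' \<Longrightarrow> n (w \<otimes> w') = n w \<diamond> n w'"
  using nmult by auto

lemma conj_T: "g \<in> carrier G \<Longrightarrow> t \<in> T \<Longrightarrow> g \<diamond> t \<diamond> gi g \<in> T"
proof -
  assume g: "g \<in> carrier G" and t: "t \<in> T"
  have tc: "t \<in> carrier G" "p t = \<one>" using t T_iff by auto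
  have "p (g \<diamond> t \<diamond> gi g) = p g \<otimes> p t \<otimes> inv (p g)"
    using g tc by (simp add: p_mult p_inv G.m_closed G.inv_closed)
  also have "\<dots> = \<one>" using tc p_carr[OF g] by simp
  finally show ?thesis using g tc by (simp add: T_iff G.m_closed G.inv_closed)
qed

lemma conj_T_lift_indep:
  assumes g: "g \<in> carrier G" and g': "g' \<in> carrier G" and pg: "p g = p g'" and t: "t \<in> T"
  shows "g \<diamond> t \<diamond> gi g = g' \<diamond> t \<diamond> gi g'"
proof -
  obtain k where kT: "k \<in> T" and g'e: "g' = g \<diamond> k"
  proof
    show "gi g \<diamond> g' \<in> T" using g g' pg by (simp add: T_iff p_mult p_inv p_carr)
    show "g' = g \<diamond> (gi g \<diamond> g')" using g g' by simp
  qed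
  have kc: "k \<in> carrier G" using kT T_carr by auto
  have tc: "t \<in> carrier G" using t T_carr by auto
  have comm: "k \<diamond> t = t \<diamond> k" using T_comm[OF kT t] .
  have "g' \<diamond> t \<diamond> gi g' = g \<diamond> (k \<diamond> t) \<diamond> gi k \<diamond> gi g"
    using g kc tc unfolding g'e by (simp add: G.m_assoc G.inv_mult_group)
  also have "\<dots> = g \<diamond> t \<diamond> (k \<diamond> gi k) \<diamond> gi g" unfolding comm using g kc tc by (simp add: G.m_assoc)
  also have "\<dots> = g \<diamond> t \<diamond> gi g" using kc g tc by simp
  finally show ?thesis by simp
qed

lemma conj_act_eq: "w \<in> carrier W \<Longrightarrow> t \<in> T \<Longrightarrow> conj_act G p w t = n w \<diamond> t \<diamond> gi (n w)"
proof -
  assume w: "w \<in> carrier W" and t: "t \<in> T"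
  let ?g = "SOME g. g \<in> carrier G \<and> p g = w"
  have "?g \<in> carrier G \<and> p ?g = w" using someI[of "\<lambda>g. g \<in> carrier G \<and> p g = w" "n w"] w n_carr p_n by blast
  then show ?thesis unfolding conj_act_def Let_def using conj_T_lift_indep[OF _ n_carr[OF w] _ t] p_n[OF w] by auto
qed

lemma elen_one: "elen \<one> = 0" using chamber_one by (simp add: ext_len_eq)

lemma n_one: "n \<one> = g1"
proof -
  have "n \<one> = n \<one> \<diamond> n \<one>" using n_mult[of \<one> \<one>] elen_one by simp
  then show ?thesis using n_carr[of \<one>] G.l_cancel_one'[of "n \<one>" "n \<one>"] by simp
qed

definition nsq :: "'w \<Rightarrow> 'g" where "nsq s = n s \<diamond> n s"

lemma nsq_T: "s \<in> S \<Longrightarrow> nsq s \<in> T"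
  using n_carr[OF S_carr] p_n[OF S_carr] S_sq
  by (simp add: nsq_def T_iff p_mult G.m_closed)

text \<open>If \<open>x s x\<inverse> = s'\<close> with \<open>\<ell>(xs) > \<ell>(x)\<close>, both \<open>xs = s'x\<close> are length additive
  products, so \<open>n(x) n(s) = n(s') n(x)\<close>; this makes the value of \<open>h\<close> on a hyperplane
  independent of how it is written as a conjugate of a simple reflection.\<close>

lemma conj_nsq_up:
  assumes x: "x \<in> carrier W" and s: "s \<in> S" and s': "s' \<in> S" and e: "x \<otimes> s \<otimes> inv x = s'"
    and up: "elen (x \<otimes> s) = Suc (elen x)"
  shows "n x \<diamond> nsq s \<diamond> gi (n x) = nsq s'"
proof -
  have c: "s \<in> carrier W" "s' \<in> carrier W" using s s' S_carr by auto
  have "s' \<otimes> x = x \<otimes> s \<otimes> inv x \<otimes> x" using e by simp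
  also have "\<dots> = x \<otimes> s" using x c by (simp add: m_assoc)
  finally have e2: "s' \<otimes> x = x \<otimes> s" .
  have n1: "n (x \<otimes> s) = n x \<diamond> n s" using n_mult[OF x c(1)] up elen_S[OF s] by simp
  have n2: "n (s' \<otimes> x) = n s' \<diamond> n x" using n_mult[OF c(2) x] up elen_S[OF s'] e2 by simp
  have key: "n x \<diamond> n s = n s' \<diamond> n x" using n1 n2 e2 by simp
  have cc: "n x \<in> carrier G" "n s \<in> carrier G" "n s' \<in> carrier G" using n_carr x c by auto
  have "n x \<diamond> nsq s \<diamond> gi (n x) = (n x \<diamond> n s) \<diamond> n s \<diamond> gi (n x)" using cc by (simp add: nsq_def G.m_assoc)
  also have "\<dots> = (n s' \<diamond> n x) \<diamond> n s \<diamond> gi (n x)" by (simp only: key)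
  also have "\<dots> = n s' \<diamond> (n x \<diamond> n s) \<diamond> gi (n x)" using cc by (simp add: G.m_assoc)
  also have "\<dots> = n s' \<diamond> (n s' \<diamond> n x) \<diamond> gi (n x)" by (simp only: key)
  also have "\<dots> = n s' \<diamond> n s'" using cc by (simp add: G.m_assoc)
  finally show ?thesis by (simp add: nsq_def)
qed

lemma conj_nsq_S:
  assumes x: "x \<in> carrier W" and s: "s \<in> S" and s': "s' \<in> S" and e: "x \<otimes> s \<otimes> inv x = s'"
  shows "n x \<diamond> nsq s \<diamond> gi (n x) = nsq s'"
proof (cases "elen (x \<otimes> s) = Suc (elen x)")
  case True
  then show ?thesis using conj_nsq_up[OF assms] by simp
next
  case False
  let ?x = "x \<otimes> s"
  have c: "s \<in> carrier W" using s S_carr by auto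
  have xc: "?x \<in> carrier W" using x c by simp
  have dn: "elen x = Suc (elen ?x)" using elen_mult_S[OF x s] False by auto
  have xss: "?x \<otimes> s = x" using mult_S_S[OF x s] .
  have e': "?x \<otimes> s \<otimes> inv ?x = s'" using e x c s by (simp add: m_assoc inv_mult_group S_inv)
  have "n ?x \<diamond> nsq s \<diamond> gi (n ?x) = nsq s'" using conj_nsq_up[OF xc s s' e'] xss dn by simp
  moreover have "n x = n ?x \<diamond> n s" using n_mult[OF xc c] xss dn elen_S[OF s] by simp
  moreover have cc: "n ?x \<in> carrier G" "n s \<in> carrier G" using n_carr xc c by auto
  ultimately show ?thesis using cc by (simp add: nsq_def G.m_assoc G.inv_mult_group)
qed

lemma conj_nsq_well_defined:
  assumes a: "a \<in> carrier W" and a': "a' \<in> carrier W" and s: "s \<in> S" and s': "s' \<in> S"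
    and e: "a \<otimes> s \<otimes> inv a = a' \<otimes> s' \<otimes> inv a'"
  shows "n a \<diamond> nsq s \<diamond> gi (n a) = n a' \<diamond> nsq s' \<diamond> gi (n a')"
proof -
  let ?x = "inv a' \<otimes> a"
  have c: "s \<in> carrier W" "s' \<in> carrier W" using s s' S_carr by auto
  have xc: "?x \<in> carrier W" using a a' by simp
  have "?x \<otimes> s \<otimes> inv ?x = inv a' \<otimes> (a \<otimes> s \<otimes> inv a) \<otimes> a'" using a a' c by (simp add: m_assoc inv_mult_group)
  also have "\<dots> = s'" unfolding e using a' c by (simp add: m_assoc)
  finally have core: "n ?x \<diamond> nsq s \<diamond> gi (n ?x) = nsq s'" using conj_nsq_S[OF xc s s'] by simp
  have cc: "n ?x \<in> carrier G" "n a' \<in> carrier G" "n a \<in> carrier G" using n_carr xc a a' by auto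
  have nT: "nsq s \<in> T" "nsq s \<in> carrier G" using nsq_T[OF s] T_carr by auto
  have "n a' \<diamond> nsq s' \<diamond> gi (n a') = (n a' \<diamond> n ?x) \<diamond> nsq s \<diamond> gi (n a' \<diamond> n ?x)"
    unfolding core[symmetric] using cc nT by (simp add: G.m_assoc G.inv_mult_group)
  also have "\<dots> = n a \<diamond> nsq s \<diamond> gi (n a)"
  proof (rule conj_T_lift_indep)
    show "p (n a' \<diamond> n ?x) = p (n a)" using cc a a' xc by (simp add: p_mult p_n m_assoc[symmetric])
  qed (use cc nT in auto)
  finally show ?thesis by simp
qed

definition refl_val :: "'w \<Rightarrow> 'g" where
  "refl_val H = (SOME g. \<exists>a s. a \<in> carrier W \<and> s \<in> S \<and> H = a \<otimes> s \<otimes> inv a \<and> g = n a \<diamond> nsq s \<diamond> gi (n a))"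

lemma refl_val_eq: "a \<in> carrier W \<Longrightarrow> s \<in> S \<Longrightarrow> refl_val (a \<otimes> s \<otimes> inv a) = n a \<diamond> nsq s \<diamond> gi (n a)"
proof -
  assume a: "a \<in> carrier W" and s: "s \<in> S"
  let ?P = "\<lambda>g. \<exists>a' s'. a' \<in> carrier W \<and> s' \<in> S \<and> a \<otimes> s \<otimes> inv a = a' \<otimes> s' \<otimes> inv a' \<and> g = n a' \<diamond> nsq s' \<diamond> gi (n a')"
  have "?P (refl_val (a \<otimes> s \<otimes> inv a))" unfolding refl_val_def by (rule someI[of ?P]) (use a s in blast)
  then obtain a' s' where "a' \<in> carrier W" "s' \<in> S" "a \<otimes> s \<otimes> inv a = a' \<otimes> s' \<otimes> inv a'"
      "refl_val (a \<otimes> s \<otimes> inv a) = n a' \<diamond> nsq s' \<diamond> gi (n a')" by blast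
  then show ?thesis using conj_nsq_well_defined[OF a _ s] by metis
qed

lemma refl_val_T: "H \<in> R \<Longrightarrow> refl_val H \<in> T"
proof -
  assume "H \<in> R"
  then obtain a s where H: "H = a \<otimes> s \<otimes> inv a" "a \<in> Waff" "s \<in> S" by (auto simp: R_iff)
  then show ?thesis using refl_val_eq[of a s] Waff_carr conj_T[OF n_carr nsq_T] by simp
qed

abbreviation "FA \<equiv> free_Abelian_group R"
abbreviation "TT \<equiv> G\<lparr>carrier := T\<rparr>"

lemma group_TT: "group TT" using abT comm_group.axioms(2) by blast
lemma carrier_TT[simp]: "carrier TT = T" by simp
lemma mult_TT[simp]: "a \<otimes>\<^bsub>TT\<^esub> b = a \<diamond> b" by simp
lemma one_TT[simp]: "\<one>\<^bsub>TT\<^esub> = g1" by simp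

lemma hyp_hom_ex: "\<exists>h. h \<in> hom FA TT \<and> (\<forall>x\<in>R. h (frag_of x) = refl_val x)"
proof -
  have "refl_val ` R \<subseteq> carrier TT" using refl_val_T by auto
  then obtain h where "h \<in> hom FA TT" "\<And>x. x \<in> R \<Longrightarrow> h (frag_of x) = refl_val x"
    using comm_group.free_Abelian_group_universal[OF abT] by metis
  then show ?thesis by blast
qed

definition "hyp_hom = (SOME h. h \<in> hom FA TT \<and> (\<forall>x\<in>R. h (frag_of x) = refl_val x))"

lemma hyp_hom: "hyp_hom \<in> hom FA TT" "\<And>x. x \<in> R \<Longrightarrow> hyp_hom (frag_of x) = refl_val x"
  using someI_ex[OF hyp_hom_ex] unfolding hyp_hom_def by auto

lemma hyp_hom_T: "x \<in> carrier FA \<Longrightarrow> hyp_hom x \<in> T"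
  using hyp_hom(1) by (auto simp: hom_def)

lemma hyp_hom_add: "x \<in> carrier FA \<Longrightarrow> y \<in> carrier FA \<Longrightarrow> hyp_hom (x + y) = hyp_hom x \<diamond> hyp_hom y"
  using hom_mult[OF hyp_hom(1)] by fastforce

lemma hyp_hom_zero: "hyp_hom 0 = g1"
proof -
  have "group_hom FA TT hyp_hom" using hyp_hom(1) group_TT by (simp add: group_hom_def group_hom_axioms_def)
  then show ?thesis using group_hom.hom_one[of FA TT hyp_hom] by simp
qed

lemma refl_val_S: "s \<in> S \<Longrightarrow> refl_val s = nsq s"
proof -
  assume s: "s \<in> S"
  have "refl_val (\<one> \<otimes> s \<otimes> inv \<one>) = n \<one> \<diamond> nsq s \<diamond> gi (n \<one>)" using refl_val_eq[OF one_closed s] .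
  then show ?thesis using s S_carr nsq_T[OF s] T_carr n_one G.inv_one by simp
qed

lemma hyp_act_carr: "w \<in> carrier W \<Longrightarrow> x \<in> carrier FA \<Longrightarrow> hyp_act W w x \<in> carrier FA"
proof -
  assume w: "w \<in> carrier W" and x: "x \<in> carrier FA"
  have "Poly_Mapping.keys (hyp_act W w x) \<subseteq> (\<Union>H \<in> Poly_Mapping.keys x. {w \<otimes> H \<otimes> inv w})"
    unfolding hyp_act_def using keys_frag_extend[of "\<lambda>H. frag_of (w \<otimes> H \<otimes> inv w)" x] by (simp add: keys_frag_of)
  also have "\<dots> \<subseteq> R" using x R_conj_W[OF w] by auto
  finally show ?thesis by simp
qed

lemma refl_val_conj: "w \<in> carrier W \<Longrightarrow> H \<in> R \<Longrightarrow> refl_val (w \<otimes> H \<otimes> inv w) = n w \<diamond> refl_val H \<diamond> gi (n w)"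
proof -
  assume w: "w \<in> carrier W" and H: "H \<in> R"
  then obtain a s where a: "H = a \<otimes> s \<otimes> inv a" "a \<in> Waff" "s \<in> S" by (auto simp: R_iff)
  have c: "a \<in> carrier W" "s \<in> carrier W" using a Waff_carr S_carr by auto
  have "w \<otimes> H \<otimes> inv w = (w \<otimes> a) \<otimes> s \<otimes> inv (w \<otimes> a)" using a c w by (simp add: m_assoc inv_mult_group)
  then have "refl_val (w \<otimes> H \<otimes> inv w) = n (w \<otimes> a) \<diamond> nsq s \<diamond> gi (n (w \<otimes> a))" using refl_val_eq[of "w \<otimes> a" s] w c a by simp
  also have "\<dots> = (n w \<diamond> n a) \<diamond> nsq s \<diamond> gi (n w \<diamond> n a)"
    using conj_T_lift_indep[of "n (w \<otimes> a)" "n w \<diamond> n a" "nsq s"] w c n_carr nsq_T[OF a(3)]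
    by (simp add: p_mult p_n)
  also have "\<dots> = n w \<diamond> (n a \<diamond> nsq s \<diamond> gi (n a)) \<diamond> gi (n w)"
    using w c n_carr nsq_T[OF a(3)] T_carr by (simp add: G.m_assoc G.inv_mult_group)
  finally show ?thesis using refl_val_eq[of a s] a c by simp
qed

lemma hyp_hom_equivariant:
  assumes w: "w \<in> carrier W" and x: "x \<in> carrier FA"
  shows "hyp_hom (hyp_act W w x) = conj_act G p w (hyp_hom x)"
proof -
  have nw: "n w \<in> carrier G" using n_carr w by auto
  have h1: "(\<lambda>x. hyp_hom (hyp_act W w x)) \<in> hom FA TT"
  proof (rule homI)
    fix x y assume x: "x \<in> carrier FA" and y: "y \<in> carrier FA"
    show "hyp_hom (hyp_act W w x) \<in> carrier TT" using hyp_hom_T hyp_act_carr[OF w x] by simp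
    show "hyp_hom (hyp_act W w (x \<otimes>\<^bsub>FA\<^esub> y)) = hyp_hom (hyp_act W w x) \<otimes>\<^bsub>TT\<^esub> hyp_hom (hyp_act W w y)"
      using hyp_hom_add hyp_act_carr[OF w] x y by (simp add: hyp_act_def frag_extend_add)
  qed
  have h2: "(\<lambda>x. n w \<diamond> hyp_hom x \<diamond> gi (n w)) \<in> hom FA TT"
  proof (rule homI)
    fix x y assume x: "x \<in> carrier FA" and y: "y \<in> carrier FA"
    show "n w \<diamond> hyp_hom x \<diamond> gi (n w) \<in> carrier TT" using conj_T[OF n_carr[OF w] hyp_hom_T[OF x]] by simp
    have c: "hyp_hom x \<in> carrier G" "hyp_hom y \<in> carrier G" using hyp_hom_T x y T_carr by auto
    show "n w \<diamond> hyp_hom (x \<otimes>\<^bsub>FA\<^esub> y) \<diamond> gi (n w) = (n w \<diamond> hyp_hom x \<diamond> gi (n w)) \<otimes>\<^bsub>TT\<^esub> (n w \<diamond> hyp_hom y \<diamond> gi (n w))"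
      using hyp_hom_add x y c nw by (simp add: G.m_assoc)
  qed
  have "hyp_hom (hyp_act W w x) = n w \<diamond> hyp_hom x \<diamond> gi (n w)"
  proof (rule free_Abelian_group_hom_eq[OF group_TT h1 h2 _ x])
    fix H assume H: "H \<in> R"
    show "hyp_hom (hyp_act W w (frag_of H)) = n w \<diamond> hyp_hom (frag_of H) \<diamond> gi (n w)"
      using hyp_hom(2) H R_conj_W[OF w H] refl_val_conj[OF w H] by (simp add: hyp_act_def)
  qed
  then show ?thesis using conj_act_eq[OF w hyp_hom_T[OF x]] by simp
qed

lemma hyp_hom_unique:
  assumes h': "h' \<in> hom FA TT"
    and eq: "\<forall>w\<in>carrier W. \<forall>x\<in>carrier FA. h' (hyp_act W w x) = conj_act G p w (h' x)"
    and hs: "\<forall>s\<in>S. h' (frag_of s) = n s \<diamond> n s"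
    and x: "x \<in> carrier FA"
  shows "h' x = hyp_hom x"
proof (rule free_Abelian_group_hom_eq[OF group_TT h' hyp_hom(1) _ x])
  fix H assume H: "H \<in> R"
  then obtain a s where a: "H = a \<otimes> s \<otimes> inv a" "a \<in> Waff" "s \<in> S" by (auto simp: R_iff)
  have ac: "a \<in> carrier W" using a Waff_carr by auto
  have "frag_of H = hyp_act W a (frag_of s)" using a by (simp add: hyp_act_def)
  then have "h' (frag_of H) = conj_act G p a (nsq s)"
    using eq ac a S_R hs by (simp add: nsq_def)
  also have "\<dots> = refl_val H" using conj_act_eq[OF ac nsq_T[OF a(3)]] refl_val_eq[OF ac a(3)] a by simp
  finally show "h' (frag_of H) = hyp_hom (frag_of H)" using hyp_hom(2)[OF H] by simp
qed

subsection \<open>The cocycle formula\<close>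

definition phi :: "'w \<Rightarrow> 'w \<Rightarrow> 'g" where
  "phi w w' = n w \<diamond> n w' \<diamond> gi (n (w \<otimes> w'))"

lemma sum_frag_of_carrier: "A \<subseteq> R \<Longrightarrow> (\<Sum>H\<in>A. frag_of H) \<in> carrier FA"
  by (rule sum_closed_free_Abelian_group) auto

lemma hyp_hom_union:
  assumes "finite A" "finite B" "A \<inter> B = {}" "A \<subseteq> R" "B \<subseteq> R"
  shows "hyp_hom (\<Sum>H\<in>A \<union> B. frag_of H) = hyp_hom (\<Sum>H\<in>A. frag_of H) \<diamond> hyp_hom (\<Sum>H\<in>B. frag_of H)"
proof -
  have "(\<Sum>H\<in>A \<union> B. frag_of H) = (\<Sum>H\<in>A. frag_of H) + (\<Sum>H\<in>B. frag_of H)"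
    by (rule sum.union_disjoint) (use assms in auto)
  then show ?thesis using hyp_hom_add[OF sum_frag_of_carrier[OF assms(4)] sum_frag_of_carrier[OF assms(5)]] by simp
qed

lemma hyp_hom_single: "r \<in> R \<Longrightarrow> hyp_hom (\<Sum>H\<in>{r}. frag_of H) = refl_val r" using hyp_hom(2) by simp

lemma phi_S:
  assumes w: "w \<in> carrier W" and s: "s \<in> S"
  shows "phi w s = hyp_hom (XX W Waff S Om w s)"
proof -
  obtain u where u: "u \<in> Om" "w = ch w \<otimes> u" "u \<otimes> s \<otimes> inv u \<in> S"
    "ch (w \<otimes> s) = ch w \<otimes> (u \<otimes> s \<otimes> inv u)"
    "w \<otimes> s \<otimes> inv w = ch w \<otimes> (u \<otimes> s \<otimes> inv u) \<otimes> inv (ch w)"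
    using chamber_mult_S[OF w s] by metis
  let ?c = "ch w" and ?s0 = "u \<otimes> s \<otimes> inv u" and ?r = "w \<otimes> s \<otimes> inv w"
  have cW: "?c \<in> Waff" using chamber_props[OF w] by blast
  have sc: "s \<in> carrier W" "s \<in> Waff" using s S_carr S_Waff by auto
  have ws: "w \<otimes> s \<in> carrier W" using w sc by simp
  have Xs1: "Xset w s = inversions ?c \<inter> {?r}" using Xset_eq[OF w sc(1)] chamber_Waff[OF sc(2)] inversions_S[OF s] by simp
  have ncs: "n w \<in> carrier G" "n s \<in> carrier G" "n (w \<otimes> s) \<in> carrier G" using n_carr w sc ws by auto
  show ?thesis
  proof (cases "len ?c < len (?c \<otimes> ?s0)")
    case True
    then have up: "len (?c \<otimes> ?s0) = Suc (len ?c)" "?r \<notin> inversions ?c" using len_mult_S_up[OF cW u(3)] u(5) by auto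
    have "elen (w \<otimes> s) = elen w + elen s" using up u(4) elen_S[OF s] by (simp add: ext_len_eq)
    then have "n (w \<otimes> s) = n w \<diamond> n s" using n_mult[OF w sc(1)] by simp
    then have "phi w s = g1" using ncs by (simp add: phi_def G.m_assoc)
    moreover have "Xset w s = {}" using Xs1 up by auto
    ultimately show ?thesis using hyp_hom_zero by (simp add: XX_eq)
  next
    case False
    then have lt: "len (?c \<otimes> ?s0) < len ?c" using len_mult_S_neq[OF cW u(3)] by linarith
    then have dn: "len ?c = Suc (len (?c \<otimes> ?s0))" "?r \<in> inversions ?c" using len_mult_S_down[OF cW u(3)] u(5) by auto
    have wss: "w \<otimes> s \<otimes> s = w" using mult_S_S[OF w s] .
    have "elen (w \<otimes> s \<otimes> s) = elen (w \<otimes> s) + elen s" using dn u(4) elen_S[OF s] wss by (simp add: ext_len_eq)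
    then have nw: "n w = n (w \<otimes> s) \<diamond> n s" using n_mult[OF ws sc(1)] wss by simp
    have "phi w s = n (w \<otimes> s) \<diamond> nsq s \<diamond> gi (n (w \<otimes> s))"
      unfolding phi_def nsq_def using nw ncs by (simp add: G.m_assoc)
    also have "\<dots> = refl_val ((w \<otimes> s) \<otimes> s \<otimes> inv (w \<otimes> s))" using refl_val_eq[OF ws s] by simp
    also have "(w \<otimes> s) \<otimes> s \<otimes> inv (w \<otimes> s) = ?r" using w sc s by (simp add: inv_mult_group S_inv m_assoc)
    finally have "phi w s = refl_val ?r" .
    moreover have "Xset w s = {?r}" using Xs1 dn by auto
    moreover have "?r \<in> R" using R_conj_W[OF w S_R[OF s]] .
    ultimately show ?thesis using hyp_hom_single by (simp add: XX_eq)
  qed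
qed

lemma phi_elen_0:
  assumes w: "w \<in> carrier W" and w': "w' \<in> carrier W" and l: "elen w' = 0"
  shows "phi w w' = hyp_hom (XX W Waff S Om w w')"
proof -
  obtain u' where u': "u' \<in> Om" "w' = ch w' \<otimes> u'" and cw': "ch w' \<in> Waff" using chamber_props[OF w'] by blast
  have c1: "ch w' = \<one>" using len_eq_0[OF cw'] l by (simp add: ext_len_eq)
  obtain u where u: "u \<in> Om" "w = ch w \<otimes> u" and cw: "ch w \<in> Waff" using chamber_props[OF w] by blast
  have uc: "u \<in> carrier W" using u Om_carr by auto
  have "ch (w \<otimes> w') = ch (ch w \<otimes> u \<otimes> w')" using u(2) by simp
  also have "\<dots> = ch w" using chamber_mult[OF cw u(1) w'] c1 uc cw Waff_carr by simp
  finally have "elen (w \<otimes> w') = elen w + elen w'" using l by (simp add: ext_len_eq)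
  then have "n (w \<otimes> w') = n w \<diamond> n w'" using n_mult[OF w w'] by simp
  then have "phi w w' = g1" using n_carr w w' by (simp add: phi_def G.m_assoc)
  moreover have "Xset w w' = {}" using Xset_eq[OF w w'] c1 inversions_one by simp
  ultimately show ?thesis using hyp_hom_zero by (simp add: XX_eq)
qed

lemma phi_split:
  assumes w: "w \<in> carrier W" and s: "s \<in> S" and w'': "w'' \<in> carrier W"
    and nn: "n (s \<otimes> w'') = n s \<diamond> n w''"
  shows "phi w (s \<otimes> w'') = phi w s \<diamond> phi (w \<otimes> s) w''"
proof -
  have sc: "s \<in> carrier W" using s S_carr by auto
  have e: "w \<otimes> s \<otimes> w'' = w \<otimes> (s \<otimes> w'')" using w sc w'' by (simp add: m_assoc)
  have c: "n w \<in> carrier G" "n s \<in> carrier G" "n w'' \<in> carrier G" "n (w \<otimes> s) \<in> carrier G"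
    "n (w \<otimes> (s \<otimes> w'')) \<in> carrier G"
    using n_carr w sc w'' by auto
  show ?thesis unfolding phi_def nn e[symmetric] using c e by (simp add: G.m_assoc)
qed

lemma phi_eq_hyp_hom_XX:
  assumes "w \<in> carrier W" and "w' \<in> carrier W"
  shows "phi w w' = hyp_hom (XX W Waff S Om w w')"
proof -
  obtain k where "elen w' = k" by simp
  then show ?thesis using assms
  proof (induction k arbitrary: w w')
    case 0
    then show ?case using phi_elen_0 by blast
  next
    case (Suc k)
    obtain s v u where s: "s \<in> S" and v: "v \<in> Waff" and u: "u \<in> Om" and w': "w' = s \<otimes> (v \<otimes> u)"
      and lv: "len v = k" and up: "len (s \<otimes> v) = Suc (len v)"
      using elen_Suc_split[OF Suc.prems(3,1)] by metis
    have sc: "s \<in> carrier W" using s S_carr by auto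
    have vu: "v \<otimes> u \<in> carrier W" "elen (v \<otimes> u) = k"
      using v u Waff_carr Om_carr chamber_mult_Om[OF v u] lv by (auto simp: ext_len_eq)
    have "elen (s \<otimes> (v \<otimes> u)) = elen s + elen (v \<otimes> u)" using Suc.prems(1) w' vu(2) elen_S[OF s] by simp
    then have "phi w w' = phi w s \<diamond> phi (w \<otimes> s) (v \<otimes> u)"
      using phi_split[OF Suc.prems(2) s vu(1)] n_mult[OF sc vu(1)] w' by simp
    also have "\<dots> = hyp_hom (XX W Waff S Om w s) \<diamond> hyp_hom (XX W Waff S Om (w \<otimes> s) (v \<otimes> u))"
      using phi_S[OF Suc.prems(2) s] Suc.IH[OF vu(2)] Suc.prems(2) sc vu(1) by simp
    also have "\<dots> = hyp_hom (XX W Waff S Om w w')"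
      unfolding XX_eq w' Xset_S_mult[OF Suc.prems(2) s v u up]
      using hyp_hom_union[OF finite_Xset finite_Xset Xset_S_mult(2)[OF Suc.prems(2) s v u up] Xset_R Xset_R]
        Suc.prems(2) sc vu(1) by simp
    finally show ?case .
  qed
qed

end
theorem lemma2p8p2:
  fixes W :: "'w monoid" and Waff S Om :: "'w set"
    and G :: "'g monoid" and T :: "'g set" and p :: "'g \<Rightarrow> 'w" and n :: "'w \<Rightarrow> 'g"
  assumes ext: "ext_coxeter W Waff S Om"
    and grpG: "group G"
    and hom_p: "p \<in> hom G W"
    and surj_p: "p ` carrier G = carrier W"
    and kerT: "T = {g \<in> carrier G. p g = \<one>\<^bsub>W\<^esub>}"
    and abT: "comm_group (G\<lparr>carrier := T\<rparr>)"
    and sec: "\<forall>w\<in>carrier W. n w \<in> carrier G \<and> p (n w) = w"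
    and mult: "\<forall>w\<in>carrier W. \<forall>w'\<in>carrier W.
                 ext_len W Waff S Om (w \<otimes>\<^bsub>W\<^esub> w') = ext_len W Waff S Om w + ext_len W Waff S Om w'
                 \<longrightarrow> n (w \<otimes>\<^bsub>W\<^esub> w') = n w \<otimes>\<^bsub>G\<^esub> n w'"
  shows "\<exists>h. (h \<in> hom (free_Abelian_group (hyperplanes W Waff S)) (G\<lparr>carrier := T\<rparr>) \<and>
              (\<forall>w\<in>carrier W. \<forall>x\<in>carrier (free_Abelian_group (hyperplanes W Waff S)).
                  h (hyp_act W w x) = conj_act G p w (h x)) \<and>
              (\<forall>s\<in>S. h (frag_of s) = n s \<otimes>\<^bsub>G\<^esub> n s)) \<and>
          (\<forall>h'. (h' \<in> hom (free_Abelian_group (hyperplanes W Waff S)) (G\<lparr>carrier := T\<rparr>) \<and>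
              (\<forall>w\<in>carrier W. \<forall>x\<in>carrier (free_Abelian_group (hyperplanes W Waff S)).
                  h' (hyp_act W w x) = conj_act G p w (h' x)) \<and>
              (\<forall>s\<in>S. h' (frag_of s) = n s \<otimes>\<^bsub>G\<^esub> n s))
             \<longrightarrow> (\<forall>x\<in>carrier (free_Abelian_group (hyperplanes W Waff S)). h' x = h x)) \<and>
          (\<forall>w\<in>carrier W. \<forall>w'\<in>carrier W.
              n w \<otimes>\<^bsub>G\<^esub> n w' \<otimes>\<^bsub>G\<^esub> inv\<^bsub>G\<^esub> (n (w \<otimes>\<^bsub>W\<^esub> w')) = h (XX W Waff S Om w w'))"
proof -
  have grpW: "group W" using ext by (simp add: ext_coxeter_def)
  interpret M: ext_cox_extension W Waff S Om G T p n
    by (rule ext_cox_extension.intro[OF ext_cox.intro[OF grpW] ext_cox_extension_axioms.intro])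
       (use ext grpG hom_p kerT abT sec mult in \<open>simp_all add: ext_cox_axioms_def\<close>)
  have hyp_hom_S: "s \<in> S \<Longrightarrow> M.hyp_hom (frag_of s) = n s \<otimes>\<^bsub>G\<^esub> n s" for s
    using M.hyp_hom(2) M.S_R M.refl_val_S by (simp add: M.nsq_def)
  show ?thesis
  proof (intro exI[of _ M.hyp_hom] conjI allI impI ballI)
  qed (auto intro: M.hyp_hom(1) M.hyp_hom_equivariant hyp_hom_S M.hyp_hom_unique
      M.phi_eq_hyp_hom_XX[unfolded M.phi_def])
qed

end
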